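(* Let $t\ge1$ be an integer, let $f_t(x)=\sum_{n\ge0}c_n^{(t)}x^n$ where $c^{(t)}_n$ is the number of permutations of $\{1,\dots,n\}$ in $\mathcal F(1,t)$, and let $g_t=xf_t$. Then $$f_t=1+xf_t+(f_t-1)\sum_{u=1}^{t}x^uf_t^u,$$ and equivalently $$g_t^{t+1}+(1-x)\left(g_t^t+g_t^{t-1}+\cdots+g_t^2\right)-g_t+x=0,$$ so that also $x\left(-g_t^{t+1}+g_t^2+g_t-1\right)+\left(g_t^{t+2}-2g_t^2+g_t\right)=0$.
   Context: Forkstack sorting with capacities $s,t\in\{1,2,3,\dots\}\cup\{\infty\}$: a permutation $\pi=\pi_1\cdots\pi_n$ of $\{1,\dots,n\}$ is placed on an input stack with $\pi_1$ on top; a working stack and an output stack are initially empty. A move either (i) removes the top $k$ elements of the input stack ($1\le k\le s$) and places them as a block, relative order unchanged, on top of the working stack, or (ii) removes the top $l$ elements of the working stack ($1\le l\le t$) and places them as a block, relative order unchanged, on top of the output stack. $\pi$ is sortable if some sequence of moves ends with input and working stacks empty and the output stack reading $1,2,\dots,n$ from top to bottom. $\mathcal F(s,t)$ is the set of sortable permutations; the empty permutation counts as sortable. *)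

theory Defs
  imports "HOL-Computational_Algebra.Formal_Power_Series" "HOL-Library.Extended_Nat"
    "HOL-Combinatorics.Multiset_Permutations"
begin

text \<open>Configurations (input, working, output); each stack is a list with the top element first.
Capacities are extended naturals (infinity allowed).\<close>

type_synonym fs_config = "nat list \<times> nat list \<times> nat list"

definition fs_step :: "enat \<Rightarrow> enat \<Rightarrow> fs_config \<Rightarrow> fs_config \<Rightarrow> bool" where
  "fs_step s t c c' \<longleftrightarrow>
     (\<exists>inp w out. c = (inp, w, out) \<and>
        ((\<exists>k. 1 \<le> k \<and> enat k \<le> s \<and> k \<le> length inp \<and>
              c' = (drop k inp, take k inp @ w, out)) \<or>
         (\<exists>l. 1 \<le> l \<and> enat l \<le> t \<and> l \<le> length w \<and>
              c' = (inp, drop l w, take l w @ out))))"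

definition fs_sortable :: "enat \<Rightarrow> enat \<Rightarrow> nat list \<Rightarrow> bool" where
  "fs_sortable s t \<pi> \<longleftrightarrow> (fs_step s t)\<^sup>*\<^sup>* (\<pi>, [], []) ([], [], [1..<length \<pi> + 1])"

definition forkstack_class :: "enat \<Rightarrow> enat \<Rightarrow> nat list set" ("\<F>") where
  "\<F> s t = {\<pi>. fs_sortable s t \<pi>}"

definition c_count :: "nat \<Rightarrow> nat \<Rightarrow> nat" where
  "c_count t n = card {\<pi> \<in> permutations_of_set {1..n}. \<pi> \<in> \<F> 1 (enat t)}"

definition f_gf :: "nat \<Rightarrow> int fps" where
  "f_gf t = Abs_fps (\<lambda>n. int (c_count t n))"

end

theory Submission
  imports Defs "HOL-Library.Sublist"
begin

abbreviation fs1_reach :: "enat \<Rightarrow> fs_config \<Rightarrow> fs_config \<Rightarrow> bool" where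
  "fs1_reach T \<equiv> (fs_step 1 T)\<^sup>*\<^sup>*"

lemma fs_step_1_iff:
  "fs_step 1 T (i, w, out) c' \<longleftrightarrow>
    (i \<noteq> [] \<and> c' = (tl i, hd i # w, out)) \<or>
    (\<exists>l. 1 \<le> l \<and> enat l \<le> T \<and> l \<le> length w \<and> c' = (i, drop l w, take l w @ out))"
proof -
  have "(\<exists>k. 1 \<le> k \<and> enat k \<le> 1 \<and> k \<le> length i \<and> c' = (drop k i, take k i @ w, out))
      \<longleftrightarrow> i \<noteq> [] \<and> c' = (tl i, hd i # w, out)"
    by (cases i) (auto simp: one_enat_def intro!: exI[of _ 1])
  then show ?thesis unfolding fs_step_def by blast
qed

lemma fs_step_push: "fs_step 1 T (x # i, w, out) (i, x # w, out)"
  by (simp add: fs_step_1_iff)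

lemma fs_step_pop:
  "1 \<le> l \<Longrightarrow> enat l \<le> T \<Longrightarrow> l \<le> length w \<Longrightarrow> fs_step 1 T (i, w, out) (i, drop l w, take l w @ out)"
  by (auto simp: fs_step_1_iff)

lemma fs1_reach_mono: "fs1_reach T c c' \<Longrightarrow> T \<le> T' \<Longrightarrow> fs1_reach T' c c'"
proof (induction rule: rtranclp_induct)
  case (step y z)
  obtain i w out where y: "y = (i, w, out)" by (cases y)
  have "fs_step 1 T' y z" using step(2,4) unfolding y fs_step_1_iff using order_trans by blast
  then show ?case using step by auto
qed auto

lemma rtranclp_map_steps:
  assumes "\<And>x y. r x y \<Longrightarrow> s\<^sup>*\<^sup>* (f x) (f y)" and "r\<^sup>*\<^sup>* x y"
  shows "s\<^sup>*\<^sup>* (f x) (f y)"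
  using assms(2) by (induction rule: rtranclp_induct) (auto intro: rtranclp_trans assms(1))

lemma fs1_reach_append:
  assumes "fs1_reach T (i, w, out) (i', w', out')"
  shows "fs1_reach T (i @ i0, w @ w0, out @ out0) (i' @ i0, w' @ w0, out' @ out0)"
proof -
  define app :: "fs_config \<Rightarrow> fs_config" where "app = (\<lambda>(i, w, out). (i @ i0, w @ w0, out @ out0))"
  have "fs_step 1 T (app c) (app c')" if "fs_step 1 T c c'" for c c'
    using that by (cases c) (auto simp: app_def fs_step_1_iff)
  then have "fs1_reach T (app c) (app c')" if "fs_step 1 T c c'" for c c'
    using that by blast
  from rtranclp_map_steps[of _ _ app, OF this assms] show ?thesis
    by (simp add: app_def)
qed

fun map_config :: "(nat \<Rightarrow> nat) \<Rightarrow> fs_config \<Rightarrow> fs_config" where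
  "map_config f (i, w, out) = (map f i, map f w, map f out)"

lemma fs1_reach_map: "fs1_reach T c c' \<Longrightarrow> fs1_reach T (map_config f c) (map_config f c')"
proof (erule rtranclp_map_steps[rotated])
  fix y z assume "fs_step 1 T y z"
  then have "fs_step 1 T (map_config f y) (map_config f z)"
    by (cases y) (auto simp: fs_step_1_iff hd_map map_tl take_map drop_map)
  then show "fs1_reach T (map_config f y) (map_config f z)" ..
qed

fun filter_config :: "(nat \<Rightarrow> bool) \<Rightarrow> fs_config \<Rightarrow> fs_config" where
  "filter_config P (i, w, out) = (filter P i, filter P w, filter P out)"

text \<open>A pop of a block of \<open>l\<close> elements becomes a pop of its \<open>l' \<le> l\<close> surviving elements
  (or no move at all if none survives).\<close>
lemma fs_step_filter:
  assumes "fs_step 1 T c c'"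
  shows "fs1_reach T (filter_config P c) (filter_config P c')"
proof -
  obtain i w out where c: "c = (i, w, out)" by (cases c)
  from assms consider x i' where "i = x # i'" "c' = (i', x # w, out)"
    | l where "1 \<le> l" "enat l \<le> T" "l \<le> length w" "c' = (i, drop l w, take l w @ out)"
    unfolding c fs_step_1_iff by (cases i) auto
  then show ?thesis
  proof cases
    case 1
    then show ?thesis unfolding c by (cases "P x") (auto intro!: r_into_rtranclp fs_step_push)
  next
    case 2
    define l' where "l' = length (filter P (take l w))"
    have w: "filter P w = filter P (take l w) @ filter P (drop l w)"
      by (metis append_take_drop_id filter_append)
    have "take l' (filter P w) = filter P (take l w)" "drop l' (filter P w) = filter P (drop l w)"
      unfolding w l'_def by auto
    moreover have "enat l' \<le> T"
      using 2 length_filter_le[of P "take l w"] unfolding l'_def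
      by (metis enat_ord_simps(1) length_take min.absorb2 order_trans)
    moreover have "l' \<le> length (filter P w)" unfolding w l'_def by simp
    ultimately have "l' \<noteq> 0 \<Longrightarrow> fs_step 1 T (filter_config P c) (filter_config P c')"
      using 2 fs_step_pop[of l' T "filter P w" "filter P i" "filter P out"] unfolding c by simp
    moreover have "l' = 0 \<Longrightarrow> filter_config P c = filter_config P c'"
      using 2 unfolding c l'_def by (simp add: w)
    ultimately show ?thesis by (cases "l' = 0") auto
  qed
qed

lemma fs1_reach_filter: "fs1_reach T c c' \<Longrightarrow> fs1_reach T (filter_config P c) (filter_config P c')"
  by (rule rtranclp_map_steps[OF fs_step_filter])

definition fs1_sortable :: "enat \<Rightarrow> nat list \<Rightarrow> bool" where
  "fs1_sortable T p \<longleftrightarrow> fs1_reach T (p, [], []) ([], [], sort p)"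

lemma fs1_sortable_filter: "fs1_sortable T p \<Longrightarrow> fs1_sortable T (filter P p)"
  unfolding fs1_sortable_def using fs1_reach_filter[of T "(p, [], [])" "([], [], sort p)" P]
  by (simp add: filter_sort)

lemma sort_map_strict_mono:
  assumes "distinct p" "strict_mono_on (set p) f"
  shows "sort (map f p) = map f (sort p)"
proof (rule strict_sorted_equal)
  have "sorted_wrt (<) (sort p)" using assms(1) by (simp add: strict_sorted_iff)
  then show "sorted_wrt (<) (map f (sort p))"
    unfolding sorted_wrt_map
    by (rule sorted_wrt_mono_rel[rotated]) (use assms(2) in \<open>auto simp: strict_mono_on_def\<close>)
  show "sorted_wrt (<) (sort (map f p))"
    using assms strict_mono_on_imp_inj_on by (auto simp: strict_sorted_iff distinct_map)
qed simp

lemma fs1_sortable_map: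
  assumes "fs1_sortable T p" "distinct p" "strict_mono_on (set p) f"
  shows "fs1_sortable T (map f p)"
  using fs1_reach_map[of T "(p, [], [])" "([], [], sort p)" f] assms
  unfolding fs1_sortable_def by (simp add: sort_map_strict_mono)

lemma sort_permutation: "p \<in> permutations_of_set {1..n} \<Longrightarrow> sort p = [1..<n + 1]"
  by (rule sorted_distinct_set_unique) (auto dest: permutations_of_setD simp del: upt_Suc)

lemma length_permutation: "p \<in> permutations_of_set {1..n} \<Longrightarrow> length p = n"
  using length_finite_permutations_of_set[of p "{1..n}"] by simp

lemma fs_sortable_iff_fs1_sortable:
  "p \<in> permutations_of_set {1..length p} \<Longrightarrow> fs_sortable 1 T p \<longleftrightarrow> fs1_sortable T p"
  unfolding fs_sortable_def fs1_sortable_def by (simp add: sort_permutation del: upt_Suc)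

definition rank :: "nat list \<Rightarrow> nat \<Rightarrow> nat" where
  "rank xs x = length (filter (\<lambda>y. y \<le> x) xs)"

definition standardize :: "nat list \<Rightarrow> nat list" where
  "standardize xs = map (rank xs) xs"

lemma rank_eq_card: "distinct xs \<Longrightarrow> rank xs x = card {y \<in> set xs. y \<le> x}"
  unfolding rank_def by (simp add: distinct_length_filter Collect_conj_eq Int_commute)

lemma strict_mono_on_rank: "distinct xs \<Longrightarrow> strict_mono_on (set xs) (rank xs)"
proof (rule strict_mono_onI)
  fix x y assume "distinct xs" "x \<in> set xs" "y \<in> set xs" "x < y"
  then have "{z \<in> set xs. z \<le> x} \<subseteq> {z \<in> set xs. z \<le> y}" "y \<in> {z \<in> set xs. z \<le> y}"
    "y \<notin> {z \<in> set xs. z \<le> x}" by auto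
  then have "{z \<in> set xs. z \<le> x} \<subset> {z \<in> set xs. z \<le> y}" by blast
  then show "rank xs x < rank xs y"
    using \<open>distinct xs\<close> by (simp add: rank_eq_card psubset_card_mono)
qed

lemma length_standardize [simp]: "length (standardize xs) = length xs"
  by (simp add: standardize_def)

lemma standardize_permutation:
  assumes "distinct xs"
  shows "standardize xs \<in> permutations_of_set {1..length xs}"
proof -
  have inj: "inj_on (rank xs) (set xs)"
    using strict_mono_on_rank[OF assms] strict_mono_on_imp_inj_on by blast
  have "rank xs ` set xs \<subseteq> {1..length xs}"
  proof
    fix r assume "r \<in> rank xs ` set xs"
    then obtain x where x: "x \<in> set xs" "r = rank xs x" by auto
    have "x \<in> {y \<in> set xs. y \<le> x}" using x by auto
    then have "0 < card {y \<in> set xs. y \<le> x}" by (subst card_gt_0_iff) auto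
    moreover have "card {y \<in> set xs. y \<le> x} \<le> card (set xs)" by (rule card_mono) auto
    ultimately show "r \<in> {1..length xs}" using x(2) assms by (simp add: rank_eq_card distinct_card)
  qed
  moreover have "card (rank xs ` set xs) = card {1..length xs}"
    using inj assms by (simp add: card_image distinct_card)
  ultimately have "set (standardize xs) = {1..length xs}"
    unfolding standardize_def by (simp add: card_subset_eq)
  moreover have "distinct (standardize xs)"
    using inj assms unfolding standardize_def by (simp add: distinct_map)
  ultimately show ?thesis by (simp add: permutations_of_set_def)
qed

lemma fs1_sortable_standardize:
  "fs1_sortable T xs \<Longrightarrow> distinct xs \<Longrightarrow> fs1_sortable T (standardize xs)"
  unfolding standardize_def by (rule fs1_sortable_map) (auto intro: strict_mono_on_rank)

lemma map_shift_standardize: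
  assumes "distinct xs" "set xs = {c<..c + length xs}"
  shows "map (\<lambda>x. x + c) (standardize xs) = xs"
proof -
  have "rank xs x + c = x" if "x \<in> set xs" for x
  proof -
    have "{y \<in> set xs. y \<le> x} = {c<..x}" using assms(2) that by auto
    then have "rank xs x = x - c" using assms(1) by (simp add: rank_eq_card)
    moreover have "c < x" using that assms(2) by auto
    ultimately show ?thesis by simp
  qed
  then show ?thesis unfolding standardize_def by (simp add: map_idI)
qed

lemma filter_in_set_subseq:
  assumes "distinct ys" "subseq xs ys"
  shows "filter (\<lambda>x. x \<in> set xs) ys = xs"
  using assms
proof (induction ys arbitrary: xs)
  case (Cons y ys)
  show ?case
  proof (cases "xs \<noteq> [] \<and> hd xs = y")
    case True
    then obtain xs' where xs: "xs = y # xs'" by (cases xs) auto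
    then have "subseq xs' ys" using Cons.prems by simp
    moreover have "filter (\<lambda>x. x \<in> set xs) ys = filter (\<lambda>x. x \<in> set xs') ys"
      using Cons.prems(1) xs by (intro filter_cong) auto
    ultimately show ?thesis using Cons xs by simp
  next
    case False
    then have "subseq xs ys" using Cons.prems(2) by (cases xs) auto
    then have "y \<notin> set xs" using Cons.prems(1) list_emb_set[of "(=)" xs ys] by auto
    then show ?thesis using Cons \<open>subseq xs ys\<close> by simp
  qed
qed (auto dest: list_emb_Nil2)

lemma fs1_sortable_subseq:
  "fs1_sortable T p \<Longrightarrow> distinct p \<Longrightarrow> subseq q p \<Longrightarrow> fs1_sortable T q"
  using fs1_sortable_filter[of T p "\<lambda>x. x \<in> set q"] by (simp add: filter_in_set_subseq)

fun nonempty_splits :: "'a list \<Rightarrow> ('a list \<times> 'a list) list" where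
  "nonempty_splits [] = []"
| "nonempty_splits (x # xs) = ([x], xs) # map (\<lambda>(a, b). (x # a, b)) (nonempty_splits xs)"

lemma take_drop_in_nonempty_splits:
  "1 \<le> l \<Longrightarrow> l \<le> length w \<Longrightarrow> (take l w, drop l w) \<in> set (nonempty_splits w)"
proof (induction w arbitrary: l)
  case (Cons x xs)
  show ?case
  proof (cases "l = 1")
    case False
    then obtain k where k: "l = Suc k" "1 \<le> k" "k \<le> length xs" using Cons.prems by (cases l) auto
    then have "(take k xs, drop k xs) \<in> set (nonempty_splits xs)" using Cons.IH by blast
    then show ?thesis using k by force
  qed simp
qed simp

text \<open>Every move decreases \<open>2 |i| + |w|\<close>, so
  \<open>n = 2 |p|\<close> moves suffice for the input \<open>p\<close>.\<close>
primrec reach_within :: "nat \<Rightarrow> nat list \<Rightarrow> nat list \<Rightarrow> nat list \<Rightarrow> nat list \<Rightarrow> bool" where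
  "reach_within 0 F i w out \<longleftrightarrow> i = [] \<and> w = [] \<and> out = F"
| "reach_within (Suc n) F i w out \<longleftrightarrow> (i = [] \<and> w = [] \<and> out = F) \<or>
     (case i of [] \<Rightarrow> False | x # i' \<Rightarrow> reach_within n F i' (x # w) out) \<or>
     list_ex (\<lambda>(b, w'). reach_within n F i w' (b @ out)) (nonempty_splits w)"

lemma fs1_reach_imp_reach_within:
  assumes "fs1_reach \<infinity> (i, w, out) ([], [], F)" "2 * length i + length w \<le> n"
  shows "reach_within n F i w out"
proof -
  have "reach_within n F i w out"
    if "fs1_reach \<infinity> c ([], [], F)" "c = (i, w, out)" "2 * length i + length w \<le> n" for c i w out n
    using that
  proof (induction arbitrary: i w out n rule: converse_rtranclp_induct)
    case base
    then show ?case by (cases n) auto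
  next
    case (step y z)
    from step.hyps(1) consider x i' where "i = x # i'" "z = (i', x # w, out)"
      | l where "1 \<le> l" "l \<le> length w" "z = (i, drop l w, take l w @ out)"
      unfolding step.prems(1) fs_step_1_iff by (cases i) auto
    then show ?case
    proof cases
      case 1
      then obtain n' where "n = Suc n'" "2 * length i' + length (x # w) \<le> n'"
        using step.prems(2) by (cases n) auto
      then show ?thesis using step.IH 1 by simp
    next
      case 2
      then obtain n' where "n = Suc n'" "2 * length i + length (drop l w) \<le> n'"
        using step.prems(2) by (cases n) auto
      moreover have "(take l w, drop l w) \<in> set (nonempty_splits w)"
        using 2 by (simp add: take_drop_in_nonempty_splits)
      ultimately show ?thesis using step.IH 2 by (force simp: list_ex_iff)
    qed
  qed
  with assms show ?thesis by blast
qed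

lemma not_fs1_sortable_if_not_reach_within:
  assumes "\<not> reach_within (2 * length q) (sort q) q [] []" "distinct p" "standardize p = q"
  shows "\<not> fs1_sortable T p"
proof
  assume "fs1_sortable T p"
  then have "fs1_sortable T q" using fs1_sortable_standardize assms(2,3) by blast
  then have "fs1_reach \<infinity> (q, [], []) ([], [], sort q)"
    unfolding fs1_sortable_def by (rule fs1_reach_mono) simp
  then show False using fs1_reach_imp_reach_within assms(1) by fastforce
qed

lemma not_fs1_sortable_3124:
  "x < y \<Longrightarrow> y < m \<Longrightarrow> m < h \<Longrightarrow> \<not> fs1_sortable T [m, x, y, h]"
  by (rule not_fs1_sortable_if_not_reach_within[where q = "[3, 1, 2, 4]"])
    (simp_all add: numeral_eq_Suc standardize_def rank_def)

lemma not_fs1_sortable_3142: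
  "l < z \<Longrightarrow> z < m \<Longrightarrow> m < h \<Longrightarrow> \<not> fs1_sortable T [m, l, h, z]"
  by (rule not_fs1_sortable_if_not_reach_within[where q = "[3, 1, 4, 2]"])
    (simp_all add: numeral_eq_Suc standardize_def rank_def)

lemma not_fs1_sortable_2314:
  "l < m \<Longrightarrow> m < x \<Longrightarrow> x < y \<Longrightarrow> \<not> fs1_sortable T [m, x, l, y]"
  by (rule not_fs1_sortable_if_not_reach_within[where q = "[2, 3, 1, 4]"])
    (simp_all add: numeral_eq_Suc standardize_def rank_def)

definition push_phase :: "nat list \<Rightarrow> fs_config set" where
  "push_phase p = {(drop k p, rev (take k p), []) | k. k \<le> length p}"

lemma fs_step_from_push_phase:
  assumes "k \<le> length p" "fs_step 1 T (drop k p, rev (take k p), []) z"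
  obtains "z \<in> push_phase p"
  | l where "1 \<le> l" "enat l \<le> T" "l \<le> k"
      "z = (drop k p, drop l (rev (take k p)), take l (rev (take k p)))"
proof -
  from assms(2) consider "k < length p" "z = (drop (Suc k) p, rev (take (Suc k) p), [])"
    | l where "1 \<le> l" "enat l \<le> T" "l \<le> k"
        "z = (drop k p, drop l (rev (take k p)), take l (rev (take k p)))"
    using assms(1) unfolding fs_step_1_iff
    by (auto simp: tl_drop drop_Suc hd_drop_conv_nth take_Suc_conv_app_nth)
  then show thesis
  proof cases
    case 1
    then have "z \<in> push_phase p" unfolding push_phase_def by (intro CollectI exI[of _ "Suc k"]) auto
    then show thesis by (rule that(1))
  qed (rule that(2))
qed

lemma suffix_last: "suffix xs ys \<Longrightarrow> xs \<noteq> [] \<Longrightarrow> last xs = last ys"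
  unfolding suffix_def by auto

lemma suffix_pop_from_push_phase_rev_upt_snoc:
  assumes "1 \<le> l" "l \<le> k" "k \<le> Suc u"
    and "suffix (take l (rev (take k (rev [1..<u + 1] @ [Suc u])))) [1..<u + 2]"
  shows "l = 1 \<and> k = Suc u"
proof -
  let ?b = "take l (rev (take k (rev [1..<u + 1] @ [Suc u])))"
  have "?b \<noteq> []" using assms(1,2) by simp
  then have last_b: "last ?b = Suc u" using suffix_last[OF assms(4)] by simp
  show ?thesis
  proof (cases "k \<le> u")
    case True
    then have "take k (rev [1..<u + 1] @ [Suc u]) = take k (rev [1..<u + 1])" by simp
    moreover have "last ?b \<in> set (take k (rev [1..<u + 1] @ [Suc u]))"
      using \<open>?b \<noteq> []\<close> by (metis in_set_takeD last_in_set set_rev)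
    ultimately have "last ?b \<in> set (rev [1..<u + 1])" by (metis in_set_takeD)
    then show ?thesis using last_b by (simp del: upt_Suc)
  next
    case False
    then have "k = Suc u" using assms(3) by simp
    moreover have "l = 1"
    proof (rule ccontr)
      assume "l \<noteq> 1"
      then obtain l' where "l = Suc l'" "1 \<le> l'" "l' \<le> u" using assms(1,2) \<open>k = Suc u\<close> by (cases l) auto
      then have "?b = Suc u # [1..<l' + 1]" using \<open>k = Suc u\<close> by (simp add: take_upt del: upt_Suc)
      then show False using last_b \<open>l' \<le> u\<close> \<open>1 \<le> l'\<close> by (simp add: last_upt del: upt_Suc)
    qed
    ultimately show ?thesis by simp
  qed
qed

text \<open>Starting from \<open>u, u - 1, \<dots>, 1, u + 1\<close>, the only run that can still succeed pushes everything,
  pops \<open>u + 1\<close> alone and then pops \<open>1, \<dots>, u\<close> as one block; every other move leaves an output that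
  is not a suffix of the sorted list, and outputs only grow at the top.\<close>
definition rev_upt_snoc_invariant :: "nat \<Rightarrow> fs_config \<Rightarrow> bool" where
  "rev_upt_snoc_invariant u c \<longleftrightarrow> c \<in> push_phase (rev [1..<u + 1] @ [Suc u]) \<or>
     c = ([], [1..<u + 1], [Suc u]) \<or> \<not> suffix (snd (snd c)) [1..<u + 2]"

lemma rev_upt_snoc_invariant_step:
  assumes "t < u" "rev_upt_snoc_invariant u y" and step: "fs_step 1 (enat t) y z"
  shows "rev_upt_snoc_invariant u z"
proof -
  define Q where "Q = rev [1..<u + 1] @ [Suc u]"
  define F where "F = [1..<u + 2]"
  have length_Q: "length Q = Suc u" by (simp add: Q_def)
  consider (push) k where "k \<le> length Q" "y = (drop k Q, rev (take k Q), [])"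
    | (popped) "y = ([], [1..<u + 1], [Suc u])" | (broken) "\<not> suffix (snd (snd y)) F"
    using assms(2) unfolding rev_upt_snoc_invariant_def push_phase_def Q_def F_def by blast
  then show ?thesis
  proof cases
    case (push k)
    show ?thesis
      using push(1) step unfolding push(2)
    proof (cases rule: fs_step_from_push_phase)
      case 1
      then show ?thesis by (simp add: rev_upt_snoc_invariant_def Q_def)
    next
      case (2 l)
      show ?thesis
      proof (cases "suffix (take l (rev (take k Q))) F")
        case True
        then have "l = 1 \<and> k = Suc u"
          using 2 push(1) suffix_pop_from_push_phase_rev_upt_snoc[of l k u, folded Q_def F_def]
          by (simp add: length_Q)
        then show ?thesis using 2 unfolding rev_upt_snoc_invariant_def Q_def by simp
      qed (use 2 in \<open>simp add: rev_upt_snoc_invariant_def F_def\<close>)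
    qed
  next
    case popped
    then obtain l where "1 \<le> l" "l \<le> t" "z = ([], drop l [1..<u + 1], [1..<l + 1] @ [Suc u])"
      using step assms(1) by (auto simp: fs_step_1_iff take_upt simp del: upt_Suc)
    moreover have "\<not> suffix ([1..<l + 1] @ [Suc u]) F"
    proof
      assume "suffix ([1..<l + 1] @ [Suc u]) F"
      moreover have "F = [1..<u + 1] @ [Suc u]" unfolding F_def by simp
      ultimately have "suffix [1..<l + 1] [1..<u + 1]" by (simp del: upt_Suc)
      then have "last [1..<l + 1] = last [1..<u + 1]"
        by (rule suffix_last) (use \<open>1 \<le> l\<close> in simp)
      then show False using \<open>1 \<le> l\<close> \<open>l \<le> t\<close> assms(1) by (simp add: last_upt del: upt_Suc)
    qed
    ultimately show ?thesis unfolding rev_upt_snoc_invariant_def F_def by simp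
  next
    case broken
    then have "\<not> suffix (snd (snd z)) F"
      using step by (cases y) (auto simp: fs_step_1_iff dest: suffix_appendD)
    then show ?thesis unfolding rev_upt_snoc_invariant_def F_def by simp
  qed
qed

lemma fs1_sortable_rev_upt_snoc:
  assumes "fs1_sortable (enat t) (rev [1..<u + 1] @ [Suc u])"
  shows "u \<le> t"
proof (rule ccontr)
  assume "\<not> u \<le> t"
  then have "t < u" by simp
  have "sort (rev [1..<u + 1] @ [Suc u]) = [1..<u + 2]"
    by (rule sorted_distinct_set_unique) (auto simp del: upt_Suc)
  then have "fs1_reach (enat t) (rev [1..<u + 1] @ [Suc u], [], []) ([], [], [1..<u + 2])"
    using assms unfolding fs1_sortable_def by simp
  moreover have "rev_upt_snoc_invariant u (rev [1..<u + 1] @ [Suc u], [], [])"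
    unfolding rev_upt_snoc_invariant_def push_phase_def by (auto intro!: exI[of _ 0])
  ultimately have "rev_upt_snoc_invariant u ([], [], [1..<u + 2])"
    by (induction rule: rtranclp_induct) (blast intro: rev_upt_snoc_invariant_step[OF \<open>t < u\<close>])+
  then show False using \<open>t < u\<close> unfolding rev_upt_snoc_invariant_def push_phase_def by simp
qed

lemma map_plus_upt: "map (\<lambda>x. x + c) [i..<j] = [i + c..<j + c]"
  by (induction j) auto

lemma fs1_sortable_rev_upt_snoc_le:
  assumes "fs1_sortable (enat t) (rev [a..<b] @ [h])" "0 < a" "a \<le> b" "b \<le> h"
  shows "b - a \<le> t"
proof -
  define u where "u = b - a"
  define f where "f x = (if x < b then x + 1 - a else Suc u)" for x
  have "strict_mono_on (set (rev [a..<b] @ [h])) f"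
    by (rule strict_mono_onI) (use assms(4) in \<open>auto simp: f_def u_def\<close>)
  then have "fs1_sortable (enat t) (map f (rev [a..<b] @ [h]))"
    using assms(1,4) by (intro fs1_sortable_map) auto
  moreover have "map f [a..<b] = [1..<u + 1]"
  proof -
    have "[a..<b] = map (\<lambda>x. x + (a - 1)) [1..<u + 1]"
      unfolding map_plus_upt u_def using assms(2,3) by (simp del: upt_Suc)
    then show ?thesis unfolding map_map comp_def using assms(2) by (auto simp: f_def u_def intro!: map_idI)
  qed
  moreover have "f h = Suc u" using assms(4) by (simp add: f_def)
  ultimately have "fs1_sortable (enat t) (rev [1..<u + 1] @ [Suc u])"
    by (simp add: rev_map[symmetric] del: upt_Suc)
  then show ?thesis unfolding u_def by (rule fs1_sortable_rev_upt_snoc)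
qed

abbreviation sumlen :: "nat list list \<Rightarrow> nat" where
  "sumlen gs \<equiv> sum_list (map length gs)"

fun ladder :: "nat \<Rightarrow> nat \<Rightarrow> nat list list \<Rightarrow> nat list" where
  "ladder a c [] = []"
| "ladder a c (g # gs) = (a + length gs) # map (\<lambda>x. x + (c + sumlen gs)) g @ ladder a c gs"

lemma upt_app: "i \<le> j \<Longrightarrow> j \<le> k \<Longrightarrow> [i..<j] @ [j..<k] = [i..<k]"
  by (metis le_add_diff_inverse upt_add_eq_append)

lemma length_ladder: "length (ladder a c gs) = length gs + sumlen gs"
  by (induction gs) auto

lemma fs1_reach_ladder:
  assumes "\<forall>g\<in>set gs. fs1_sortable T g \<and> g \<in> permutations_of_set {1..length g}"
  shows "fs1_reach T (ladder a c gs @ R, W, OT) (R, [a..<a + length gs] @ W, [c + 1..<c + sumlen gs + 1] @ OT)"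
  using assms
proof (induction gs arbitrary: R W OT)
  case Nil
  then show ?case by simp
next
  case (Cons g gs)
  define k where "k = c + sumlen gs"
  define p where "p = a + length gs"
  have g: "fs1_sortable T g" "g \<in> permutations_of_set {1..length g}" using Cons.prems by auto
  have s1: "fs1_reach T (ladder a c (g # gs) @ R, W, OT) (map (\<lambda>x. x + k) g @ ladder a c gs @ R, p # W, OT)"
    unfolding k_def p_def by (auto intro!: r_into_rtranclp fs_step_push)
  have "fs1_reach T (g, [], []) ([], [], [1..<length g + 1])"
    using g unfolding fs1_sortable_def by (simp add: sort_permutation)
  from fs1_reach_map[OF this, of "\<lambda>x. x + k"]
  have "fs1_reach T (map (\<lambda>x. x + k) g, [], []) ([], [], [k + 1..<k + length g + 1])"
    by (simp add: map_plus_upt add.commute del: upt_Suc)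
  from fs1_reach_append[OF this, of "ladder a c gs @ R" "p # W" OT]
  have s2: "fs1_reach T (map (\<lambda>x. x + k) g @ ladder a c gs @ R, p # W, OT)
      (ladder a c gs @ R, p # W, [k + 1..<k + length g + 1] @ OT)" by simp
  have s3: "fs1_reach T (ladder a c gs @ R, p # W, [k + 1..<k + length g + 1] @ OT)
     (R, [a..<a + length gs] @ p # W, [c + 1..<c + sumlen gs + 1] @ [k + 1..<k + length g + 1] @ OT)"
    using Cons by simp
  have e1: "[a..<a + length gs] @ p # W = [a..<a + length (g # gs)] @ W" unfolding p_def by simp
  have e2: "[c + 1..<c + sumlen gs + 1] @ [k + 1..<k + length g + 1] = [c + 1..<c + sumlen (g # gs) + 1]"
    unfolding k_def by (subst upt_app) (auto simp: ac_simps)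
  have all: "fs1_reach T (ladder a c (g # gs) @ R, W, OT)
     (R, [a..<a + length gs] @ p # W, ([c + 1..<c + sumlen gs + 1] @ [k + 1..<k + length g + 1]) @ OT)"
    using rtranclp_trans[OF rtranclp_trans[OF s1 s2] s3] by (simp only: append_assoc)
  then show ?case by (simp only: e1 e2)
qed

lemma set_ladder:
  assumes "\<forall>g\<in>set gs. g \<in> permutations_of_set {1..length g}" "a + length gs \<le> c + 1"
  shows "set (ladder a c gs) = {a..<a + length gs} \<union> {c<..c + sumlen gs} \<and> distinct (ladder a c gs)"
  using assms
proof (induction gs)
  case Nil
  then show ?case by simp
next
  case (Cons g gs)
  define k where "k = c + sumlen gs"
  define p where "p = a + length gs"
  have g: "set g = {1..length g}" "distinct g" using Cons.prems by (auto simp: permutations_of_set_def)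
  have IH: "set (ladder a c gs) = {a..<p} \<union> {c<..k} \<and> distinct (ladder a c gs)"
    using Cons unfolding p_def k_def by simp
  have "(\<lambda>x. x + k) ` {1..length g} = {1 + k..length g + k}" by (rule image_add_atLeastAtMost')
  then have sm: "set (map (\<lambda>x. x + k) g) = {k<..k + length g}" using g by auto
  have pc: "p \<le> c" using Cons.prems(2) unfolding p_def by simp
  have kc: "c \<le> k" unfolding k_def by simp
  have "set (ladder a c (g # gs)) = {p} \<union> {k<..k + length g} \<union> ({a..<p} \<union> {c<..k})"
    using IH sm unfolding p_def k_def by auto
  also have "\<dots> = {a..<a + length (g # gs)} \<union> {c<..c + sumlen (g # gs)}"
    using pc kc unfolding p_def k_def by auto
  finally have s: "set (ladder a c (g # gs)) = {a..<a + length (g # gs)} \<union> {c<..c + sumlen (g # gs)}" .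
  have "distinct (map (\<lambda>x. x + k) g)" using g by (simp add: distinct_map)
  moreover have "p \<notin> set (map (\<lambda>x. x + k) g)" using sm pc kc by auto
  moreover have "p \<notin> set (ladder a c gs)" using IH pc by auto
  moreover have "set (map (\<lambda>x. x + k) g) \<inter> set (ladder a c gs) = {}" using sm IH pc kc by auto
  ultimately have "distinct (ladder a c (g # gs))" using IH unfolding p_def k_def by simp
  with s show ?case by blast
qed

lemma hd_ladder: "gs \<noteq> [] \<Longrightarrow> hd (ladder a c gs) = a + length gs - 1"
  by (cases gs) auto

lemma ladder_ne: "gs \<noteq> [] \<Longrightarrow> ladder a c gs \<noteq> []"
  by (cases gs) auto

lemma ladder_inj:
  assumes "length gs = length gs'" "a + length gs \<le> c + 1"
    "\<forall>g\<in>set gs. 0 \<notin> set g" "\<forall>g\<in>set gs'. 0 \<notin> set g" "ladder a c gs = ladder a c gs'"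
  shows "gs = gs'"
  using assms
proof (induction gs arbitrary: gs')
  case Nil
  then show ?case by simp
next
  case (Cons g gs)
  then obtain g' hs where gs': "gs' = g' # hs" by (cases gs') auto
  define k where "k = c + sumlen gs"
  define k' where "k' = c + sumlen hs"
  have len: "length gs = length hs" using Cons.prems gs' by simp
  have eq: "map (\<lambda>x. x + k) g @ ladder a c gs = map (\<lambda>x. x + k') g' @ ladder a c hs"
    using Cons.prems(5) gs' len unfolding k_def k'_def by simp
  have g0: "\<forall>x\<in>set g. 0 < x" using Cons.prems(3) by (metis gr0I list.set_intros(1))
  have g0': "\<forall>x\<in>set g'. 0 < x" using Cons.prems(4) gs' by (metis gr0I list.set_intros(1))
  have P1: "\<forall>x\<in>set (map (\<lambda>x. x + k) g). c < x" using g0 unfolding k_def by auto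
  have P2: "\<forall>x\<in>set (map (\<lambda>x. x + k') g'). c < x" using g0' unfolding k'_def by auto
  have Q: "takeWhile (\<lambda>x. c < x) (ladder a c xs) = [] \<and> dropWhile (\<lambda>x. c < x) (ladder a c xs) = ladder a c xs"
    if "a + length xs \<le> c" for xs
  proof (cases xs)
    case (Cons y ys)
    then show ?thesis using that by simp
  qed simp
  have Q1: "takeWhile (\<lambda>x. c < x) (ladder a c gs) = []" "dropWhile (\<lambda>x. c < x) (ladder a c gs) = ladder a c gs"
    using Q[of gs] Cons.prems(2) by auto
  have Q2: "takeWhile (\<lambda>x. c < x) (ladder a c hs) = []" "dropWhile (\<lambda>x. c < x) (ladder a c hs) = ladder a c hs"
    using Q[of hs] Cons.prems(2) len by auto
  have "takeWhile (\<lambda>x. c < x) (map (\<lambda>x. x + k) g @ ladder a c gs) = map (\<lambda>x. x + k) g"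
    by (rule trans[OF takeWhile_append2]) (use P1 Q1 in auto)
  moreover have "takeWhile (\<lambda>x. c < x) (map (\<lambda>x. x + k') g' @ ladder a c hs) = map (\<lambda>x. x + k') g'"
    by (rule trans[OF takeWhile_append2]) (use P2 Q2 in auto)
  ultimately have m: "map (\<lambda>x. x + k) g = map (\<lambda>x. x + k') g'" using eq by simp
  then have "ladder a c gs = ladder a c hs" using eq by simp
  then have "gs = hs" using Cons.IH[of hs] Cons.prems gs' len by simp
  then have "k = k'" unfolding k_def k'_def by simp
  then have "g = g'" using m by (simp add: inj_map_eq_map inj_def)
  then show ?case using gs' \<open>gs = hs\<close> by simp
qed

lemma last_ladder:
  assumes "gs \<noteq> []" "last gs \<noteq> []" "\<forall>g\<in>set gs. 0 \<notin> set g"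
  shows "c < last (ladder a c gs)"
  using assms
proof (induction gs)
  case Nil then show ?case by simp
next
  case (Cons g gs)
  show ?case
  proof (cases "gs = []")
    case True
    then have "g \<noteq> []" "0 \<notin> set g" using Cons.prems by auto
    then have "0 < last g" by (metis gr0I last_in_set)
    then show ?thesis using True \<open>g \<noteq> []\<close> by (simp add: last_map)
  next
    case False
    then have "c < last (ladder a c gs)" using Cons by simp
    then show ?thesis using False by (simp add: ladder_ne)
  qed
qed

function runs_above :: "nat \<Rightarrow> nat list \<Rightarrow> nat list list" where
  "runs_above c xs = (case dropWhile (\<lambda>x. c < x) xs of
      [] \<Rightarrow> [takeWhile (\<lambda>x. c < x) xs]
    | y # r \<Rightarrow> takeWhile (\<lambda>x. c < x) xs # runs_above c r)"
  by pat_completeness auto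
termination
proof (relation "measure (\<lambda>(c, xs). length xs)")
  fix c xs y r assume "dropWhile (\<lambda>x. c < x) xs = y # r"
  moreover have "length (dropWhile (\<lambda>x. c < x) xs) \<le> length xs" by (rule length_dropWhile_le)
  ultimately show "((c, r), c, xs) \<in> measure (\<lambda>(c, xs). length xs)" by simp
qed simp

declare runs_above.simps[simp del]

lemma runs_above_all: assumes "\<forall>x\<in>set xs. c < x" shows "runs_above c xs = [xs]"
proof -
  have "dropWhile (\<lambda>x. c < x) xs = []" using assms by (simp add: dropWhile_eq_Nil_conv)
  moreover have "takeWhile (\<lambda>x. c < x) xs = xs" using assms by (simp add: takeWhile_eq_all_conv)
  ultimately show ?thesis
    by (subst runs_above.simps) (simp del: dropWhile_eq_Nil_conv takeWhile_eq_all_conv)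
qed

lemma runs_above_cons: "\<forall>x\<in>set g. c < x \<Longrightarrow> \<not> c < l \<Longrightarrow> runs_above c (g @ l # r) = g # runs_above c r"
  by (subst runs_above.simps) (simp add: dropWhile_append2 takeWhile_append2)

lemma runs_above_split:
  obtains (all) "\<forall>x\<in>set xs. c < x" "runs_above c xs = [xs]"
  | (cons) g l r where "xs = g @ l # r" "\<forall>x\<in>set g. c < x" "\<not> c < l" "runs_above c xs = g # runs_above c r"
proof (cases "\<forall>x\<in>set xs. c < x")
  case True
  then show ?thesis using all runs_above_all by blast
next
  case False
  define g where "g = takeWhile (\<lambda>x. c < x) xs"
  have "dropWhile (\<lambda>x. c < x) xs \<noteq> []" using False by (simp add: dropWhile_eq_Nil_conv)
  then obtain l r where lr: "dropWhile (\<lambda>x. c < x) xs = l # r" by (cases "dropWhile (\<lambda>x. c < x) xs") auto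
  have xs: "xs = g @ l # r" unfolding g_def using lr takeWhile_dropWhile_id by metis
  have g: "\<forall>x\<in>set g. c < x" unfolding g_def by (auto dest: set_takeWhileD)
  have l: "\<not> c < l" using lr by (metis hd_dropWhile list.distinct(1) list.sel(1))
  show ?thesis using cons[OF xs g l] runs_above_cons[OF g l] xs by blast
qed

lemma runs_above_len: "length (runs_above c xs) = length (filter (\<lambda>x. \<not> c < x) xs) + 1"
proof (induction "length xs" arbitrary: xs rule: less_induct)
  case less
  show ?case
  proof (cases xs rule: runs_above_split[of _ c])
    case all
    then show ?thesis by (simp add: filter_empty_conv)
  next
    case (cons g l r)
    have "length r < length xs" using cons by simp
    then show ?thesis using less cons by (simp add: filter_empty_conv)
  qed
qed

lemma runs_above_sum: "sumlen (runs_above c xs) = length (filter (\<lambda>x. c < x) xs)"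
proof (induction "length xs" arbitrary: xs rule: less_induct)
  case less
  show ?case
  proof (cases xs rule: runs_above_split[of _ c])
    case all
    then show ?thesis by simp
  next
    case (cons g l r)
    have "length r < length xs" using cons by simp
    moreover have "filter (\<lambda>x. c < x) g = g" using cons by simp
    ultimately show ?thesis using less cons by simp
  qed
qed

lemma runs_above_infix: "g \<in> set (runs_above c xs) \<Longrightarrow> \<exists>A B. xs = A @ g @ B"
proof (induction "length xs" arbitrary: xs rule: less_induct)
  case less
  show ?case
  proof (cases xs rule: runs_above_split[of _ c])
    case all
    then have "g = xs" using less.prems by simp
    then show ?thesis by (intro exI[of _ "[]"]) simp
  next
    case (cons g' l r)
    show ?thesis
    proof (cases "g = g'")
      case True then show ?thesis using cons by auto
    next
      case False
      then have "g \<in> set (runs_above c r)" using less.prems cons by simp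
      moreover have "length r < length xs" using cons by simp
      ultimately obtain A B where "r = A @ g @ B" using less by blast
      then show ?thesis using cons by (intro exI[of _ "g' @ l # A"] exI[of _ B]) simp
    qed
  qed
qed

lemma runs_above_last: "xs \<noteq> [] \<Longrightarrow> c < last xs \<Longrightarrow> last (runs_above c xs) \<noteq> []"
proof (induction "length xs" arbitrary: xs rule: less_induct)
  case less
  show ?case
  proof (cases xs rule: runs_above_split[of _ c])
    case all
    then show ?thesis using less by auto
  next
    case (cons g l r)
    have "r \<noteq> []" using cons less.prems by auto
    then have "last r = last xs" using cons by simp
    moreover have "length r < length xs" using cons by simp
    ultimately have "last (runs_above c r) \<noteq> []" using less \<open>r \<noteq> []\<close> by simp
    moreover have "runs_above c r \<noteq> []" using runs_above_len[of c r] by auto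
    ultimately show ?thesis using cons by simp
  qed
qed

lemma runs_above_nil: "runs_above c [] = [[]]"
  by (simp add: runs_above_all)

lemma lower_block_of_interval:
  assumes "distinct ys" "A \<union> set ys = {c<..c + K}" "A \<inter> set ys = {}"
    and "\<And>x y. x \<in> A \<Longrightarrow> y \<in> set ys \<Longrightarrow> y < x"
  shows "set ys = {c<..c + length ys}" "A = {c + length ys<..c + K}" "length ys \<le> K"
proof -
  have down_closed: "z \<in> set ys" if "y \<in> set ys" "c < z" "z \<le> y" for y z
  proof -
    have "z \<in> A \<union> set ys" using that assms(2) by (metis greaterThanAtMost_iff le_trans Un_iff)
    then show ?thesis using assms(4) that by force
  qed
  have "set ys \<subseteq> {c<..c + length ys}"
  proof
    fix y assume y: "y \<in> set ys"
    then have "c < y" using assms(2) by auto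
    have "{c<..y} \<subseteq> set ys" using down_closed y by auto
    then have "card {c<..y} \<le> card (set ys)" by (rule card_mono[rotated]) simp
    then show "y \<in> {c<..c + length ys}" using \<open>c < y\<close> assms(1) by (simp add: distinct_card)
  qed
  then show ys: "set ys = {c<..c + length ys}"
    using assms(1) by (intro card_subset_eq) (auto simp: distinct_card)
  have "set ys \<subseteq> {c<..c + K}" using assms(2) by auto
  then have "card (set ys) \<le> card {c<..c + K}" by (rule card_mono[rotated]) simp
  then show "length ys \<le> K" using assms(1) by (simp add: distinct_card)
  have "A = {c<..c + K} - set ys" using assms(2,3) by blast
  also have "\<dots> = {c + length ys<..c + K}" unfolding ys by auto
  finally show "A = {c + length ys<..c + K}" .
qed

lemma standardize_first_run:
  assumes "distinct (g @ r)" "\<forall>x\<in>set g. c < x"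
    and "set g \<union> set (filter (\<lambda>x. c < x) r) = {c<..c + K}"
    and "\<And>x y. x \<in> set g \<Longrightarrow> y \<in> set r \<Longrightarrow> c < y \<Longrightarrow> y < x"
  shows "set (filter (\<lambda>x. c < x) r) = {c<..c + length (filter (\<lambda>x. c < x) r)}"
    and "map (\<lambda>x. x + (c + length (filter (\<lambda>x. c < x) r))) (standardize g) = g"
proof -
  let ?H = "filter (\<lambda>x. c < x) r"
  have "distinct ?H" "set g \<inter> set ?H = {}" using assms(1) by auto
  moreover have "y < x" if "x \<in> set g" "y \<in> set ?H" for x y using assms(4) that by simp
  ultimately have H: "set ?H = {c<..c + length ?H}" and g: "set g = {c + length ?H<..c + K}"
    and "length ?H \<le> K"
    using lower_block_of_interval[OF _ assms(3)] by blast+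
  then show "set ?H = {c<..c + length ?H}" by blast
  have "length g = K - length ?H" using g assms(1) distinct_card[of g] by simp
  then have "set g = {c + length ?H<..c + length ?H + length g}" using g \<open>length ?H \<le> K\<close> by simp
  then show "map (\<lambda>x. x + (c + length ?H)) (standardize g) = g"
    using map_shift_standardize assms(1) by (simp add: add.assoc)
qed

lemma ladder_standardize_runs_above:
  assumes "distinct X" "filter (\<lambda>x. \<not> c < x) X = rev [a..<p]" "a \<le> p"
    and "set (filter (\<lambda>x. c < x) X) = {c<..c + K}"
    and "\<And>A x B l C y D. X = A @ x # B @ l # C @ y # D \<Longrightarrow> c < x \<Longrightarrow> \<not> c < l \<Longrightarrow> c < y \<Longrightarrow> y < x"
  shows "p # X = ladder a c (map standardize (runs_above c X))"
  using assms
proof (induction "length X" arbitrary: X p K rule: less_induct)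
  case less
  show ?case
  proof (cases X rule: runs_above_split[of _ c])
    case all
    then have "[a..<p] = []" using less.prems(2) by (simp add: filter_empty_conv)
    then have "p = a" using less.prems(3) by auto
    have "card (set X) = length X" using less.prems(1) by (rule distinct_card)
    moreover have "set X = {c<..c + K}" using less.prems(4) all by simp
    ultimately have "map (\<lambda>x. x + c) (standardize X) = X"
      using map_shift_standardize less.prems(1) by simp
    then show ?thesis using all \<open>p = a\<close> by simp
  next
    case (cons g l r)
    let ?H = "filter (\<lambda>x. c < x) r"
    have "rev [a..<p] = l # filter (\<lambda>x. \<not> c < x) r" using less.prems(2) cons by simp
    then have "a < p" by (cases "a < p") simp_all
    then have "rev [a..<p] = (p - 1) # rev [a..<p - 1]" by (cases p) simp_all
    then have l: "l = p - 1" and fr: "filter (\<lambda>x. \<not> c < x) r = rev [a..<p - 1]"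
      using \<open>rev [a..<p] = l # _\<close> by simp_all
    have below: "y < x" if x: "x \<in> set g" and y: "y \<in> set r" and "c < y" for x y
    proof -
      obtain A B where "g = A @ x # B" using x by (meson split_list)
      moreover obtain C D where "r = C @ y # D" using y by (meson split_list)
      ultimately have "X = A @ x # B @ l # C @ y # D" using cons by simp
      then show ?thesis using less.prems(5) cons x \<open>c < y\<close> by blast
    qed
    have dist: "distinct (g @ r)" "distinct r" using less.prems(1) cons by simp_all
    have "set g \<union> set ?H = {c<..c + K}" using less.prems(4) cons by auto
    note first = standardize_first_run[OF dist(1) cons(2) this below]
    have r_dec: "y < x" if "r = A @ x # B @ l' # C @ y # D" "c < x" "\<not> c < l'" "c < y" for A x B l' C y D
      using less.prems(5)[of "g @ l # A" x B l' C y D] cons that by simp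
    have "length r < length X" "a \<le> p - 1" using cons \<open>a < p\<close> by simp_all
    then have "(p - 1) # r = ladder a c (map standardize (runs_above c r))"
      using less.hyps dist(2) fr first(1) r_dec by blast
    moreover have "length (runs_above c r) = p - a"
      using runs_above_len[of c r] fr \<open>a < p\<close> by simp
    moreover have "sumlen (map standardize (runs_above c r)) = length ?H"
      using runs_above_sum[of c r] by (simp add: comp_def)
    ultimately show ?thesis using cons first(2) l \<open>a < p\<close> by simp
  qed
qed

definition sortable_perms :: "nat \<Rightarrow> nat list set" where
  "sortable_perms t = {p. p \<in> permutations_of_set {1..length p} \<and> fs1_sortable (enat t) p}"

text \<open>The decomposition \<open>(G\<^sub>1 \<dots> G\<^sub>u, D)\<close> of a nonempty sortable permutation.  The proviso on the
  last block makes it unique: an empty \<open>G\<^sub>u\<close> with \<open>u > 1\<close> would let its pushed element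
  \<open>a = length D + 1\<close> be read as the head of \<open>D\<close> instead.\<close>
definition decompositions :: "nat \<Rightarrow> (nat list list \<times> nat list) set" where
  "decompositions t = {(gs, d). 1 \<le> length gs \<and> length gs \<le> t \<and> set gs \<subseteq> sortable_perms t \<and>
      d \<in> sortable_perms t \<and> (last gs \<noteq> [] \<or> gs = [[]])}"

fun assemble :: "nat list list \<times> nat list \<Rightarrow> nat list" where
  "assemble (gs, d) = ladder (length d + 1) (length d + length gs) gs @ d"

lemma sortable_perms_perm: "p \<in> sortable_perms t \<Longrightarrow> p \<in> permutations_of_set {1..length p}"
  unfolding sortable_perms_def by blast

lemma sortable_perms_fs1_sortable: "p \<in> sortable_perms t \<Longrightarrow> fs1_sortable (enat t) p"
  unfolding sortable_perms_def by blast

lemma length_assemble: "length (assemble x) = length (fst x) + sumlen (fst x) + length (snd x)"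
  by (cases x) (simp add: length_ladder)

lemma zero_notin_permutation: "p \<in> permutations_of_set {1..n :: nat} \<Longrightarrow> 0 \<notin> set p"
  by (auto simp: permutations_of_set_def)

lemma assemble_permutation:
  assumes "(gs, d) \<in> decompositions t"
  shows "assemble (gs, d) \<in> permutations_of_set {1..length (assemble (gs, d))}"
proof -
  let ?L = "ladder (length d + 1) (length d + length gs) gs"
  have "\<forall>g\<in>set gs. g \<in> permutations_of_set {1..length g}" "d \<in> permutations_of_set {1..length d}"
    using assms sortable_perms_perm unfolding decompositions_def by auto
  then have L: "set ?L = {length d + 1..<length d + 1 + length gs} \<union> {length d + length gs<..length d + length gs + sumlen gs}"
    "distinct ?L" and d: "set d = {1..length d}" "distinct d"
    using set_ladder[of gs "length d + 1" "length d + length gs"] by (auto simp: permutations_of_set_def)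
  have "set (assemble (gs, d)) = {1..length (assemble (gs, d))}"
    unfolding assemble.simps set_append L d by (auto simp: length_ladder)
  moreover have "distinct (assemble (gs, d))" using L d by auto
  ultimately show ?thesis by (simp add: permutations_of_set_def)
qed

text \<open>Push the pushed elements of the ladder one by one and sort every block on the way, pop the
  pushed elements as one block of size \<open>u \<le> t\<close>, and finally sort \<open>D\<close>.\<close>
lemma fs1_reach_assemble:
  assumes "(gs, d) \<in> decompositions t"
  shows "fs1_reach (enat t) (assemble (gs, d), [], []) ([], [], [1..<length (assemble (gs, d)) + 1])"
proof -
  let ?a = "length d + 1" and ?c = "length d + length gs" and ?S = "sumlen gs"
  have gs: "\<forall>g\<in>set gs. fs1_sortable (enat t) g \<and> g \<in> permutations_of_set {1..length g}"
    and u: "1 \<le> length gs" "length gs \<le> t" and d: "d \<in> sortable_perms t"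
    using assms sortable_perms_perm sortable_perms_fs1_sortable unfolding decompositions_def by auto
  have ladder: "fs1_reach (enat t) (assemble (gs, d), [], []) (d, [?a..<?c + 1], [?c + 1..<?c + ?S + 1])"
    using fs1_reach_ladder[OF gs, of ?a ?c d "[]" "[]"] by (simp del: upt_Suc)
  have pop: "fs_step 1 (enat t) (d, [?a..<?c + 1], [?c + 1..<?c + ?S + 1])
      (d, [], [?a..<?c + 1] @ [?c + 1..<?c + ?S + 1])"
    using fs_step_pop[of "length gs" "enat t" "[?a..<?c + 1]" d] u by (simp del: upt_Suc)
  have "sort d = [1..<?a]" using sortable_perms_perm[OF d] by (rule sort_permutation)
  then have "fs1_reach (enat t) (d, [], []) ([], [], [1..<?a])"
    using sortable_perms_fs1_sortable[OF d] unfolding fs1_sortable_def by simp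
  from fs1_reach_append[OF this, of "[]" "[]" "[?a..<?c + 1] @ [?c + 1..<?c + ?S + 1]"]
  have sort_d: "fs1_reach (enat t) (d, [], [?a..<?c + 1] @ [?c + 1..<?c + ?S + 1])
      ([], [], [1..<?a] @ [?a..<?c + 1] @ [?c + 1..<?c + ?S + 1])"
    by (simp only: append_Nil append_Nil2)
  from ladder pop have "fs1_reach (enat t) (assemble (gs, d), [], [])
      (d, [], [?a..<?c + 1] @ [?c + 1..<?c + ?S + 1])" ..
  from this sort_d have "fs1_reach (enat t) (assemble (gs, d), [], [])
      ([], [], [1..<?a] @ [?a..<?c + 1] @ [?c + 1..<?c + ?S + 1])" by (rule rtranclp_trans)
  also have "[1..<?a] @ [?a..<?c + 1] @ [?c + 1..<?c + ?S + 1] = [1..<?c + ?S + 1]"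
    by (simp add: upt_app del: upt_Suc)
  also have "?c + ?S = length (assemble (gs, d))" by (simp add: length_ladder)
  finally show ?thesis .
qed

lemma assemble_in_sortable_perms:
  assumes "x \<in> decompositions t"
  shows "assemble x \<in> sortable_perms t"
proof -
  obtain gs d where x: "x = (gs, d)" by (cases x)
  have "sort (assemble x) = [1..<length (assemble x) + 1]"
    using assemble_permutation[OF assms[unfolded x]] unfolding x by (rule sort_permutation)
  then show ?thesis
    using assemble_permutation[of gs d t] fs1_reach_assemble[of gs d t] assms
    unfolding x sortable_perms_def fs1_sortable_def by simp
qed

lemma takeWhile_rev_append:
  assumes "\<forall>y\<in>set d. P y" "ys \<noteq> [] \<Longrightarrow> \<not> P (last ys)"
  shows "takeWhile P (rev (ys @ d)) = rev d"
proof -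
  have "takeWhile P (rev d @ rev ys) = rev d @ takeWhile P (rev ys)"
    by (rule takeWhile_append2) (use assms(1) in auto)
  moreover have "takeWhile P (rev ys) = []"
    using assms(2) by (cases "rev ys") (auto simp flip: last_rev)
  ultimately show ?thesis by simp
qed

lemma hd_assemble:
  assumes "x \<in> decompositions t"
  shows "hd (assemble x) = length (snd x) + length (fst x)"
proof -
  obtain gs d where x: "x = (gs, d)" by (cases x)
  have "gs \<noteq> []" using assms unfolding x decompositions_def by auto
  then show ?thesis by (simp add: x hd_append2 hd_ladder ladder_ne)
qed

lemma takeWhile_less_hd_assemble:
  assumes "x \<in> decompositions t"
  shows "takeWhile (\<lambda>y. y < hd (assemble x)) (rev (tl (assemble x))) = rev (snd x)"
proof -
  obtain gs d where x: "x = (gs, d)" by (cases x)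
  let ?B = "ladder (length d + 1) (length d + length gs) gs"
  have gs: "gs \<noteq> []" "last gs \<noteq> [] \<or> gs = [[]]" "set gs \<subseteq> sortable_perms t"
    and d: "d \<in> sortable_perms t"
    using assms unfolding x decompositions_def by auto
  have gs0: "\<forall>g\<in>set gs. 0 \<notin> set g"
    using gs(3) sortable_perms_perm zero_notin_permutation by blast
  have head: "hd (assemble x) = length d + length gs" using hd_assemble[OF assms] by (simp add: x)
  have tail: "tl (assemble x) = tl ?B @ d" using ladder_ne[OF gs(1)] by (simp add: x)
  have "takeWhile (\<lambda>y. y < length d + length gs) (rev (tl ?B @ d)) = rev d"
  proof (rule takeWhile_rev_append)
    show "\<not> last (tl ?B) < length d + length gs" if "tl ?B \<noteq> []"
    proof -
      have "last gs \<noteq> []" using gs(2) that by auto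
      then have "length d + length gs < last ?B" using last_ladder[OF gs(1) _ gs0] by blast
      then show ?thesis using that by (simp add: last_tl)
    qed
    have "\<forall>y\<in>set d. y \<le> length d" using sortable_perms_perm[OF d] by (auto simp: permutations_of_set_def)
    moreover have "length d < length d + length gs" using gs(1) by simp
    ultimately show "\<forall>y\<in>set d. y < length d + length gs" by (meson le_less_trans)
  qed
  then show ?thesis unfolding head tail by (simp add: x)
qed

lemma assemble_inj: "inj_on assemble (decompositions t)"
proof (rule inj_onI)
  fix x y assume x: "x \<in> decompositions t" and y: "y \<in> decompositions t" and eq: "assemble x = assemble y"
  obtain gs d where xe: "x = (gs, d)" by (cases x)
  obtain gs' d' where ye: "y = (gs', d')" by (cases y)
  have "d = d'"
    using takeWhile_less_hd_assemble[OF x] takeWhile_less_hd_assemble[OF y] eq xe ye by simp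
  moreover have "length gs = length gs'" using hd_assemble[OF x] hd_assemble[OF y] eq xe ye \<open>d = d'\<close> by simp
  moreover have "\<forall>g\<in>set gs. 0 \<notin> set g" "\<forall>g\<in>set gs'. 0 \<notin> set g"
    using x y xe ye unfolding decompositions_def by (auto dest!: sortable_perms_perm zero_notin_permutation)
  ultimately have "gs = gs'"
    using eq ladder_inj[of gs gs' "length d + 1" "length d + length gs"] xe ye by simp
  with \<open>d = d'\<close> show "x = y" using xe ye by simp
qed

lemma sorted_wrt_filter_if:
  assumes "\<And>A x B y C. xs = A @ x # B @ y # C \<Longrightarrow> P x \<Longrightarrow> P y \<Longrightarrow> R x y"
  shows "sorted_wrt R (filter P xs)"
  using assms
proof (induction xs)
  case (Cons z zs)
  have "sorted_wrt R (filter P zs)"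
    by (rule Cons.IH) (use Cons.prems[of "z # _"] in simp)
  moreover have "R z y" if "P z" "y \<in> set zs" "P y" for y
  proof -
    obtain B C where "zs = B @ y # C" using \<open>y \<in> set zs\<close> by (meson split_list)
    then show ?thesis using Cons.prems[of "[]" z B y C] that by simp
  qed
  ultimately show ?case by auto
qed simp

locale sortable_head_split =
  fixes t m :: nat and X dl :: "nat list"
  assumes in_sortable_perms: "m # X @ dl \<in> sortable_perms t"
    and last_X_gt: "X \<noteq> [] \<Longrightarrow> m < last X"
    and dl_lt: "\<And>x. x \<in> set dl \<Longrightarrow> x < m"
begin

lemma sortable: "fs1_sortable (enat t) (m # X @ dl)"
  using in_sortable_perms by (rule sortable_perms_fs1_sortable)

lemma distinct: "distinct (m # X @ dl)" and set_eq: "set (m # X @ dl) = {1..Suc (length X + length dl)}"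
  using sortable_perms_perm[OF in_sortable_perms] by (auto simp: permutations_of_set_def)

lemma sortable_pattern:
  assumes "subseq q (m # X @ dl)"
  shows "fs1_sortable (enat t) q"
  using fs1_sortable_subseq[OF sortable distinct assms] .

lemma small_X_decreasing:
  assumes "X = A @ x # B @ y # C" "x < m" "y < m"
  shows "y < x"
proof (rule ccontr)
  assume "\<not> y < x"
  with distinct assms(1) have "x < y" by auto
  obtain C' h where C: "C = C' @ [h]"
    using last_X_gt assms by (cases C rule: rev_cases) auto
  then have "m < h" using last_X_gt assms(1) by simp
  have "subseq [m, x, y, h] (m # X @ dl)"
    unfolding assms(1) C append_assoc append_Cons by (intro subseq_Cons2 subseq_drop_many) simp
  then show False using not_fs1_sortable_3124 \<open>x < y\<close> \<open>y < m\<close> \<open>m < h\<close> sortable_pattern by blast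
qed

lemma dl_below_small_X:
  assumes "l \<in> set X" "l < m" "z \<in> set dl"
  shows "z < l"
proof (rule ccontr)
  assume "\<not> z < l"
  with distinct assms have "l < z" by (metis Un_iff disjoint_iff linorder_neqE_nat set_append distinct.simps(2) distinct_append)
  obtain A B where X: "X = A @ l # B" using assms(1) by (meson split_list)
  obtain B' h where B: "B = B' @ [h]"
    using last_X_gt assms(2) X by (cases B rule: rev_cases) auto
  then have "m < h" using last_X_gt X by simp
  obtain C D where dl: "dl = C @ z # D" using assms(3) by (meson split_list)
  have "subseq [m, l, h, z] (m # X @ dl)"
    unfolding X B dl append_assoc append_Cons by (intro subseq_Cons2 subseq_drop_many) simp
  then show False
    using not_fs1_sortable_3142 \<open>l < z\<close> dl_lt[OF assms(3)] \<open>m < h\<close> sortable_pattern by blast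
qed

lemma large_X_decreasing:
  assumes "X = A @ x # B @ l # C @ y # D" "m < x" "\<not> m < l" "m < y"
  shows "y < x"
proof (rule ccontr)
  assume "\<not> y < x"
  with distinct assms(1) have "x < y" by auto
  have "l < m" using distinct assms(1,3) by auto
  have "subseq [m, x, l, y] (m # X @ dl)"
    unfolding assms(1) append_assoc append_Cons by (intro subseq_Cons2 subseq_drop_many) simp
  then show False using not_fs1_sortable_2314 \<open>l < m\<close> \<open>m < x\<close> \<open>x < y\<close> sortable_pattern by blast
qed

lemma small_X_sorted: "sorted_wrt (>) (filter (\<lambda>x. x < m) X)"
  by (rule sorted_wrt_filter_if) (rule small_X_decreasing)

lemma set_dl_and_small_X:
  shows "set dl = {1..length dl}" and "filter (\<lambda>x. x < m) X = rev [Suc (length dl)..<m]"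
proof -
  let ?L = "filter (\<lambda>x. x < m) X"
  have "m \<le> Suc (length X + length dl)" using set_eq by auto
  then have "{x \<in> set (m # X @ dl). x < m} = {0<..0 + (m - 1)}" unfolding set_eq by auto
  moreover have "{x \<in> set (m # X @ dl). x < m} = set ?L \<union> set dl" using dl_lt by auto
  ultimately have "set ?L \<union> set dl = {0<..0 + (m - 1)}" by simp
  moreover have "set ?L \<inter> set dl = {}" using distinct by auto
  moreover have "y < x" if "x \<in> set ?L" "y \<in> set dl" for x y using dl_below_small_X that by simp
  moreover have "distinct dl" using distinct by simp
  ultimately have dl: "set dl = {0<..0 + length dl}" and L: "set ?L = {0 + length dl<..0 + (m - 1)}"
    using lower_block_of_interval[of dl "set ?L" 0 "m - 1"] by blast+
  have "{0<..length dl} = {1..length dl}" by auto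
  then show "set dl = {1..length dl}" using dl by simp
  have "set (rev ?L) = {length dl<..m - 1}" using L by simp
  also have "\<dots> = set [Suc (length dl)..<m]" by auto
  finally have "set [Suc (length dl)..<m] = set (rev ?L)" ..
  moreover have "sorted_wrt (<) (rev ?L)" using small_X_sorted by (simp add: sorted_wrt_rev)
  ultimately have "rev ?L = [Suc (length dl)..<m]" by (intro strict_sorted_equal) (auto simp: sorted_wrt_upt)
  then show "?L = rev [Suc (length dl)..<m]" by (metis rev_rev_ident)
qed

lemma length_dl_less: "length dl < m"
proof (cases "dl = []")
  case True
  have "m \<in> {1..Suc (length X + length dl)}" unfolding set_eq[symmetric] by simp
  then show ?thesis using True by simp
next
  case False
  then have "length dl \<in> set dl" using set_dl_and_small_X(1) by (simp add: Suc_leI)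
  then show ?thesis by (rule dl_lt)
qed

lemma large_X_set: "set (filter (\<lambda>x. m < x) X) = {m<..m + (Suc (length X + length dl) - m)}"
proof -
  have "m \<le> Suc (length X + length dl)" using set_eq by auto
  then have "{x \<in> set (m # X @ dl). m < x} = {m<..m + (Suc (length X + length dl) - m)}"
    unfolding set_eq by auto
  moreover have "{x \<in> set (m # X @ dl). m < x} = set (filter (\<lambda>x. m < x) X)"
    using dl_lt by force
  ultimately show ?thesis by simp
qed

lemma not_large_X: "filter (\<lambda>x. \<not> m < x) X = rev [Suc (length dl)..<m]"
proof -
  have "filter (\<lambda>x. \<not> m < x) X = filter (\<lambda>x. x < m) X"
    using distinct by (intro filter_cong) auto
  then show ?thesis using set_dl_and_small_X(2) by simp
qed

lemma ladder_runs_above: "m # X = ladder (Suc (length dl)) m (map standardize (runs_above m X))"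
  using distinct not_large_X length_dl_less large_X_set large_X_decreasing
  by (intro ladder_standardize_runs_above) auto

lemma length_runs_above: "length (runs_above m X) = m - length dl"
  using runs_above_len[of m X] not_large_X length_dl_less by simp

lemma length_runs_above_le:
  assumes "1 \<le> t"
  shows "length (runs_above m X) \<le> t"
proof (cases "X = []")
  case True
  then have "m = Suc (length dl)" using not_large_X length_dl_less by simp
  then show ?thesis using assms unfolding length_runs_above by simp
next
  case False
  then obtain X' h where X: "X = X' @ [h]" by (cases X rule: rev_cases) auto
  then have "m < h" using last_X_gt by simp
  have "filter (\<lambda>x. x < m) X' = rev [Suc (length dl)..<m]"
    using set_dl_and_small_X(2) \<open>m < h\<close> unfolding X by simp
  then have "subseq (rev [Suc (length dl)..<m]) X'" by (metis subseq_filter_left)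
  then have "subseq (m # rev [Suc (length dl)..<m] @ [h]) (m # X' @ [h] @ dl)"
    by (intro subseq_Cons2 list_emb_append_mono) auto
  then have "fs1_sortable (enat t) (rev [Suc (length dl)..<Suc m] @ [h])"
    using sortable_pattern length_dl_less unfolding X by simp
  then have "Suc m - Suc (length dl) \<le> t"
    using length_dl_less \<open>m < h\<close> by (intro fs1_sortable_rev_upt_snoc_le) auto
  then show ?thesis by (simp add: length_runs_above)
qed

lemma standardize_runs_above_in_sortable_perms:
  assumes "g \<in> set (runs_above m X)"
  shows "standardize g \<in> sortable_perms t"
proof -
  obtain A B where X: "X = A @ g @ B" using runs_above_infix[OF assms] by blast
  then have "sublist g (m # X @ dl)" unfolding sublist_def by (metis append.assoc append_Cons)
  then have "fs1_sortable (enat t) g" using sortable_pattern by (blast dest: sublist_imp_subseq)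
  moreover have "distinct g" using distinct unfolding X by simp
  ultimately show ?thesis
    unfolding sortable_perms_def
    by (auto intro: fs1_sortable_standardize standardize_permutation[of g, simplified])
qed

lemma dl_in_sortable_perms: "dl \<in> sortable_perms t"
proof -
  have "suffix dl (m # X @ dl)" by (simp add: suffix_def)
  then have "fs1_sortable (enat t) dl" using sortable_pattern by (blast dest: suffix_imp_subseq)
  moreover have "dl \<in> permutations_of_set {1..length dl}"
    using set_dl_and_small_X(1) distinct by (auto simp: permutations_of_set_def)
  ultimately show ?thesis unfolding sortable_perms_def by simp
qed

lemma last_runs_above:
  "last (map standardize (runs_above m X)) \<noteq> [] \<or> map standardize (runs_above m X) = [[]]"
proof (cases "X = []")
  case True
  then show ?thesis by (simp add: runs_above_nil standardize_def)
next
  case False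
  then have "last (runs_above m X) \<noteq> []" "runs_above m X \<noteq> []"
    using runs_above_last last_X_gt runs_above_len[of m X] by auto
  moreover have "standardize (last (runs_above m X)) \<noteq> []"
    using calculation(1) by (metis length_0_conv length_standardize)
  ultimately show ?thesis by (simp add: last_map)
qed

end

lemma sortable_head_split_exists:
  assumes "p \<in> sortable_perms t" "p \<noteq> []"
  obtains m X dl where "p = m # X @ dl" "sortable_head_split t m X dl"
proof -
  obtain m rest where p: "p = m # rest" using assms(2) by (cases p) auto
  define dl where "dl = rev (takeWhile (\<lambda>x. x < m) (rev rest))"
  define X where "X = rev (dropWhile (\<lambda>x. x < m) (rev rest))"
  have "p = m # X @ dl" unfolding p X_def dl_def by (metis rev_append rev_rev_ident takeWhile_dropWhile_id)
  moreover have "m < last X" if "X \<noteq> []"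
  proof -
    have "last X = hd (dropWhile (\<lambda>x. x < m) (rev rest))" unfolding X_def by (simp add: last_rev)
    then have "\<not> last X < m" using that hd_dropWhile[of "\<lambda>x. x < m" "rev rest"] unfolding X_def by auto
    moreover have "last X \<noteq> m"
      using sortable_perms_perm[OF assms(1)] \<open>p = m # X @ dl\<close> that last_in_set
      by (fastforce simp: permutations_of_set_def)
    ultimately show ?thesis by simp
  qed
  moreover have "x < m" if "x \<in> set dl" for x
    using that unfolding dl_def by (auto dest: set_takeWhileD)
  ultimately show thesis using assms(1) by (intro that) (unfold_locales, auto)
qed

lemma assemble_surj:
  assumes "1 \<le> t" "p \<in> sortable_perms t" "p \<noteq> []"
  shows "p \<in> assemble ` decompositions t"
proof -
  obtain m X dl where p: "p = m # X @ dl" and split: "sortable_head_split t m X dl"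
    using sortable_head_split_exists[OF assms(2,3)] .
  interpret sortable_head_split t m X dl by (rule split)
  define gs where "gs = map standardize (runs_above m X)"
  have "(gs, dl) \<in> decompositions t"
    unfolding decompositions_def gs_def
    using length_runs_above length_dl_less length_runs_above_le[OF assms(1)] last_runs_above
      standardize_runs_above_in_sortable_perms dl_in_sortable_perms
    by auto
  moreover have "assemble (gs, dl) = p"
    using ladder_runs_above length_runs_above length_dl_less unfolding p gs_def by simp
  ultimately show ?thesis by (metis image_eqI)
qed

definition finite_levels :: "'a set \<Rightarrow> ('a \<Rightarrow> nat) \<Rightarrow> bool" where
  "finite_levels A w \<longleftrightarrow> (\<forall>n. finite {x \<in> A. w x = n})"

definition counting_fps :: "'a set \<Rightarrow> ('a \<Rightarrow> nat) \<Rightarrow> 'b :: comm_semiring_1 fps" where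
  "counting_fps A w = Abs_fps (\<lambda>n. of_nat (card {x \<in> A. w x = n}))"

lemma counting_fps_nth: "fps_nth (counting_fps A w) n = of_nat (card {x \<in> A. w x = n})"
  by (simp add: counting_fps_def)

lemma
  assumes "\<And>x. x \<in> A \<Longrightarrow> w x = w' x"
  shows counting_fps_cong: "counting_fps A w = counting_fps A w'"
    and finite_levels_cong: "finite_levels A w \<Longrightarrow> finite_levels A w'"
proof -
  have levels: "{x \<in> A. w x = n} = {x \<in> A. w' x = n}" for n using assms by auto
  show "counting_fps A w = counting_fps A w'" by (simp add: counting_fps_def levels)
  show "finite_levels A w \<Longrightarrow> finite_levels A w'" by (simp add: finite_levels_def levels)
qed

lemma finite_levels_subset:
  assumes "finite_levels A w" "B \<subseteq> A"
  shows "finite_levels B w"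
  unfolding finite_levels_def
proof
  fix n
  have "{x \<in> B. w x = n} \<subseteq> {x \<in> A. w x = n}" using assms(2) by auto
  then show "finite {x \<in> B. w x = n}"
    by (rule finite_subset) (use assms(1) in \<open>simp add: finite_levels_def\<close>)
qed

lemma finite_levels_singleton: "finite_levels {x} w"
  unfolding finite_levels_def by simp

lemma counting_fps_singleton: "counting_fps {x} w = fps_X ^ w x"
proof (rule fps_ext)
  fix n
  have "{y \<in> {x}. w y = n} = (if n = w x then {x} else {})" by auto
  then show "fps_nth (counting_fps {x} w) n = fps_nth (fps_X ^ w x) n"
    by (simp add: counting_fps_nth fps_X_power_nth)
qed

lemma counting_fps_empty: "counting_fps {} w = 0"
  by (simp add: counting_fps_def fps_zero_def)

lemma
  assumes "A \<inter> B = {}" "finite_levels A w" "finite_levels B w"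
  shows counting_fps_Un: "counting_fps (A \<union> B) w = counting_fps A w + counting_fps B w"
    and finite_levels_Un: "finite_levels (A \<union> B) w"
proof -
  have levels: "{x \<in> A \<union> B. w x = n} = {x \<in> A. w x = n} \<union> {x \<in> B. w x = n}" for n by auto
  have "card {x \<in> A \<union> B. w x = n} = card {x \<in> A. w x = n} + card {x \<in> B. w x = n}" for n
    unfolding levels using assms by (intro card_Un_disjoint) (auto simp: finite_levels_def)
  then show "counting_fps (A \<union> B) w = counting_fps A w + counting_fps B w"
    by (simp add: fps_eq_iff counting_fps_nth)
  show "finite_levels (A \<union> B) w" using assms unfolding finite_levels_def levels by auto
qed

lemma
  assumes "inj_on h A"
  shows counting_fps_image: "counting_fps (h ` A) w = counting_fps A (w \<circ> h)"
    and finite_levels_image: "finite_levels A (w \<circ> h) \<Longrightarrow> finite_levels (h ` A) w"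
proof -
  have levels: "{y \<in> h ` A. w y = n} = h ` {x \<in> A. w (h x) = n}" for n by auto
  have "card {y \<in> h ` A. w y = n} = card {x \<in> A. (w \<circ> h) x = n}" for n
    unfolding levels using assms by (auto intro: card_image inj_on_subset)
  then show "counting_fps (h ` A) w = counting_fps A (w \<circ> h)" by (simp add: counting_fps_def)
  show "finite_levels A (w \<circ> h) \<Longrightarrow> finite_levels (h ` A) w"
    unfolding finite_levels_def levels by simp
qed

lemma
  shows counting_fps_shift: "counting_fps A (\<lambda>x. k + w x) = fps_X ^ k * counting_fps A w"
    and finite_levels_shift: "finite_levels A w \<Longrightarrow> finite_levels A (\<lambda>x. k + w x)"
proof -
  have levels: "{x \<in> A. k + w x = n} = (if n < k then {} else {x \<in> A. w x = n - k})" for n by auto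
  show "counting_fps A (\<lambda>x. k + w x) = fps_X ^ k * counting_fps A w"
    by (rule fps_ext) (simp add: counting_fps_nth fps_X_power_mult_nth levels)
  show "finite_levels A w \<Longrightarrow> finite_levels A (\<lambda>x. k + w x)"
    unfolding finite_levels_def levels by simp
qed

lemma
  assumes "finite_levels A v" "finite_levels B w"
  shows counting_fps_Times: "counting_fps (A \<times> B) (\<lambda>(a, b). v a + w b) = counting_fps A v * counting_fps B w"
    and finite_levels_Times: "finite_levels (A \<times> B) (\<lambda>(a, b). v a + w b)"
proof -
  have levels: "{x \<in> A \<times> B. (\<lambda>(a, b). v a + w b) x = n} =
      (\<Union>i\<in>{0..n}. {a \<in> A. v a = i} \<times> {b \<in> B. w b = n - i})" for n
    by auto
  show "finite_levels (A \<times> B) (\<lambda>(a, b). v a + w b)"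
    using assms unfolding finite_levels_def levels by auto
  have "card {x \<in> A \<times> B. (\<lambda>(a, b). v a + w b) x = n} =
      (\<Sum>i=0..n. card {a \<in> A. v a = i} * card {b \<in> B. w b = n - i})" for n
    unfolding levels using assms
    by (subst card_UN_disjoint) (auto simp: finite_levels_def card_cartesian_product)
  then show "counting_fps (A \<times> B) (\<lambda>(a, b). v a + w b) = counting_fps A v * counting_fps B w"
    by (simp add: fps_eq_iff fps_mult_nth counting_fps_nth)
qed

lemma
  assumes "finite_levels S length"
  shows counting_fps_lists:
      "counting_fps {xs \<in> lists S. length xs = j} (\<lambda>xs. length xs + sumlen xs) =
        (fps_X * counting_fps S length :: 'a :: comm_semiring_1 fps) ^ j"
    and finite_levels_lists: "finite_levels {xs \<in> lists S. length xs = j} (\<lambda>xs. length xs + sumlen xs)"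
proof (induction j)
  case 0
  have "{xs \<in> lists S. length xs = 0} = {[]}" by auto
  then show "(counting_fps {xs \<in> lists S. length xs = 0} (\<lambda>xs. length xs + sumlen xs) :: 'a fps) =
      (fps_X * counting_fps S length) ^ 0"
    "finite_levels {xs \<in> lists S. length xs = 0} (\<lambda>xs. length xs + sumlen xs)"
    by (simp_all add: counting_fps_singleton finite_levels_singleton)
next
  case (Suc j)
  let ?L = "{xs \<in> lists S. length xs = j}" and ?w = "\<lambda>xs. length xs + sumlen xs"
  have L: "{xs \<in> lists S. length xs = Suc j} = (\<lambda>(x, xs). x # xs) ` (S \<times> ?L)"
    by (auto simp: length_Suc_conv)
  have inj: "inj_on (\<lambda>(x, xs). x # xs) (S \<times> ?L)" by (auto simp: inj_on_def)
  have w: "(?w \<circ> (\<lambda>(x, xs). x # xs)) y = 1 + (\<lambda>(x, xs). length x + ?w xs) y" for y :: "nat list \<times> nat list list"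
    by (cases y) simp
  have fin: "finite_levels (S \<times> ?L) (\<lambda>(x, xs). length x + ?w xs)"
    using assms Suc.IH(2) by (rule finite_levels_Times)
  have "(counting_fps {xs \<in> lists S. length xs = Suc j} ?w :: 'a fps) =
      counting_fps (S \<times> ?L) (\<lambda>y. 1 + (\<lambda>(x, xs). length x + ?w xs) y)"
    unfolding L counting_fps_image[OF inj] by (rule counting_fps_cong) (simp only: w)
  also have "\<dots> = fps_X * counting_fps (S \<times> ?L) (\<lambda>(x, xs). length x + ?w xs)"
    using counting_fps_shift[of "S \<times> ?L" 1 "\<lambda>(x, xs). length x + ?w xs"] by simp
  also have "\<dots> = fps_X * (counting_fps S length * counting_fps ?L ?w)"
    by (simp only: counting_fps_Times[OF assms Suc.IH(2)])
  also have "\<dots> = (fps_X * counting_fps S length) ^ Suc j"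
    unfolding Suc.IH(1) by (simp add: algebra_simps)
  finally show "(counting_fps {xs \<in> lists S. length xs = Suc j} ?w :: 'a fps) =
      (fps_X * counting_fps S length) ^ Suc j" .
  have "finite_levels (S \<times> ?L) (?w \<circ> (\<lambda>(x, xs). x # xs))"
    by (rule finite_levels_cong[OF _ finite_levels_shift[OF fin, of 1]]) (simp only: w)
  then show "finite_levels {xs \<in> lists S. length xs = Suc j} ?w"
    unfolding L by (rule finite_levels_image[OF inj])
qed

lemma
  assumes "finite_levels S length"
  shows counting_fps_short_lists:
      "counting_fps {xs \<in> lists S. length xs < t} (\<lambda>xs. length xs + sumlen xs) =
        (\<Sum>j<t. (fps_X * counting_fps S length :: 'a :: comm_semiring_1 fps) ^ j)"
    and finite_levels_short_lists: "finite_levels {xs \<in> lists S. length xs < t} (\<lambda>xs. length xs + sumlen xs)"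
proof (induction t)
  case 0
  show "(counting_fps {xs \<in> lists S. length xs < 0} (\<lambda>xs. length xs + sumlen xs) :: 'a fps) =
      (\<Sum>j<0. (fps_X * counting_fps S length) ^ j)"
    "finite_levels {xs \<in> lists S. length xs < 0} (\<lambda>xs. length xs + sumlen xs)"
    by (simp_all add: counting_fps_empty finite_levels_def)
next
  case (Suc t)
  have U: "{xs \<in> lists S. length xs < Suc t} = {xs \<in> lists S. length xs < t} \<union> {xs \<in> lists S. length xs = t}"
    by auto
  have D: "{xs \<in> lists S. length xs < t} \<inter> {xs \<in> lists S. length xs = t} = {}" by auto
  show "(counting_fps {xs \<in> lists S. length xs < Suc t} (\<lambda>xs. length xs + sumlen xs) :: 'a fps) =
      (\<Sum>j<Suc t. (fps_X * counting_fps S length) ^ j)"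
    unfolding U counting_fps_Un[OF D Suc.IH(2) finite_levels_lists[OF assms]]
    by (simp add: Suc.IH(1) counting_fps_lists[OF assms])
  show "finite_levels {xs \<in> lists S. length xs < Suc t} (\<lambda>xs. length xs + sumlen xs)"
    unfolding U by (rule finite_levels_Un[OF D Suc.IH(2) finite_levels_lists[OF assms]])
qed

lemma finite_levels_sortable_perms: "finite_levels (sortable_perms t) length"
proof -
  have "{p \<in> sortable_perms t. length p = n} \<subseteq> permutations_of_set {1..n}" for n
    using sortable_perms_perm by auto
  then show ?thesis unfolding finite_levels_def by (metis finite_permutations_of_set finite_subset)
qed

lemma Nil_in_sortable_perms: "[] \<in> sortable_perms t"
  unfolding sortable_perms_def fs1_sortable_def by simp

lemma f_gf_eq_counting_fps: "f_gf t = counting_fps (sortable_perms t) length"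
proof -
  have "{\<pi> \<in> permutations_of_set {1..n}. \<pi> \<in> \<F> 1 (enat t)} = {p \<in> sortable_perms t. length p = n}" for n
  proof (intro set_eqI iffI)
    fix p assume "p \<in> {\<pi> \<in> permutations_of_set {1..n}. \<pi> \<in> \<F> 1 (enat t)}"
    then have "p \<in> permutations_of_set {1..length p}" "length p = n" "fs_sortable 1 (enat t) p"
      by (auto simp: forkstack_class_def length_permutation)
    then show "p \<in> {p \<in> sortable_perms t. length p = n}"
      by (simp add: sortable_perms_def fs_sortable_iff_fs1_sortable)
  next
    fix p assume "p \<in> {p \<in> sortable_perms t. length p = n}"
    then have "p \<in> permutations_of_set {1..length p}" "length p = n" "fs1_sortable (enat t) p"
      by (auto simp: sortable_perms_def)
    then show "p \<in> {\<pi> \<in> permutations_of_set {1..n}. \<pi> \<in> \<F> 1 (enat t)}"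
      by (simp add: forkstack_class_def fs_sortable_iff_fs1_sortable)
  qed
  then show ?thesis by (simp add: f_gf_def counting_fps_def c_count_def)
qed

lemma counting_fps_nonempty_sortable_perms:
  "counting_fps (sortable_perms t - {[]}) length = f_gf t - 1"
proof -
  have "finite_levels (sortable_perms t - {[]}) length"
    using finite_levels_sortable_perms by (rule finite_levels_subset) auto
  then have "(counting_fps ({[]} \<union> (sortable_perms t - {[]})) length :: int fps) =
      counting_fps {[] :: nat list} length + counting_fps (sortable_perms t - {[]}) length"
    by (intro counting_fps_Un finite_levels_singleton) auto
  moreover have "{[]} \<union> (sortable_perms t - {[]}) = sortable_perms t" using Nil_in_sortable_perms by auto
  ultimately show ?thesis by (simp add: f_gf_eq_counting_fps counting_fps_singleton)
qed

lemma decompositions_eq: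
  assumes "1 \<le> t"
  shows "decompositions t = (\<lambda>d. ([[]], d)) ` sortable_perms t \<union>
    (\<lambda>(xs, g, d). (xs @ [g], d)) `
      ({xs \<in> lists (sortable_perms t). length xs < t} \<times> ((sortable_perms t - {[]}) \<times> sortable_perms t))"
    (is "_ = ?P \<union> ?R")
proof (intro equalityI subsetI)
  fix x assume "x \<in> decompositions t"
  then obtain gs d where x: "x = (gs, d)" and gs: "1 \<le> length gs" "length gs \<le> t"
    "set gs \<subseteq> sortable_perms t" "last gs \<noteq> [] \<or> gs = [[]]" and d: "d \<in> sortable_perms t"
    unfolding decompositions_def by auto
  show "x \<in> ?P \<union> ?R"
  proof (cases "gs = [[]]")
    case True
    then show ?thesis using x d by auto
  next
    case False
    have "gs \<noteq> []" using gs by auto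
    then have "gs = butlast gs @ [last gs]" by simp
    moreover have "last gs \<noteq> []" using gs False by simp
    moreover have "butlast gs \<in> lists (sortable_perms t)" "last gs \<in> sortable_perms t"
      using gs \<open>gs \<noteq> []\<close> by (auto dest: in_set_butlastD)
    ultimately have "(butlast gs, last gs, d) \<in> {xs \<in> lists (sortable_perms t). length xs < t} \<times>
        ((sortable_perms t - {[]}) \<times> sortable_perms t)" "x = (\<lambda>(xs, g, d). (xs @ [g], d)) (butlast gs, last gs, d)"
      using gs d x by auto
    then show ?thesis by blast
  qed
next
  fix x assume "x \<in> ?P \<union> ?R"
  then show "x \<in> decompositions t"
    using assms Nil_in_sortable_perms unfolding decompositions_def by auto
qed


lemma
  shows counting_fps_decompositions_Nil:
      "counting_fps ((\<lambda>d. ([[]], d)) ` sortable_perms t) (length \<circ> assemble) = fps_X * f_gf t"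
    and finite_levels_decompositions_Nil:
      "finite_levels ((\<lambda>d. ([[]], d)) ` sortable_perms t) (length \<circ> assemble)"
proof -
  have inj: "inj_on (\<lambda>d. ([[]], d)) (sortable_perms t)" by (auto simp: inj_on_def)
  have w: "\<And>d. ((length \<circ> assemble) \<circ> (\<lambda>d. ([[]], d))) d = 1 + length d"
    by (simp add: length_assemble)
  show "counting_fps ((\<lambda>d. ([[]], d)) ` sortable_perms t) (length \<circ> assemble) = fps_X * f_gf t"
    unfolding counting_fps_image[OF inj] counting_fps_cong[OF w]
    by (simp add: counting_fps_shift[of _ 1, simplified] f_gf_eq_counting_fps)
  show "finite_levels ((\<lambda>d. ([[]], d)) ` sortable_perms t) (length \<circ> assemble)"
    using inj finite_levels_cong[OF w[symmetric] finite_levels_shift[OF finite_levels_sortable_perms]]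
    by (rule finite_levels_image)
qed


lemma
  fixes t :: nat
  defines "R \<equiv> {xs \<in> lists (sortable_perms t). length xs < t} \<times> ((sortable_perms t - {[]}) \<times> sortable_perms t)"
  shows counting_fps_decompositions_snoc:
      "counting_fps ((\<lambda>(xs, g, d). (xs @ [g], d)) ` R) (length \<circ> assemble) =
        fps_X * ((\<Sum>j<t. (fps_X * f_gf t) ^ j) * ((f_gf t - 1) * f_gf t))"
    and finite_levels_decompositions_snoc:
      "finite_levels ((\<lambda>(xs, g, d). (xs @ [g], d)) ` R) (length \<circ> assemble)"
proof -
  let ?S = "sortable_perms t"
  let ?w = "\<lambda>(xs, gd). (length xs + sumlen xs) + (\<lambda>(g, d). length g + length d) gd"
  have inj: "inj_on (\<lambda>(xs, g, d). (xs @ [g], d)) R" by (auto simp: R_def inj_on_def)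
  have w: "\<And>y. ((length \<circ> assemble) \<circ> (\<lambda>(xs, g, d). (xs @ [g], d))) y = 1 + ?w y"
    by (auto simp: length_assemble)
  have fin_S: "finite_levels ?S length" by (rule finite_levels_sortable_perms)
  have fin_S': "finite_levels (?S - {[]}) length" using fin_S by (rule finite_levels_subset) auto
  have fin_L: "finite_levels {xs \<in> lists ?S. length xs < t} (\<lambda>xs. length xs + sumlen xs)"
    using fin_S by (rule finite_levels_short_lists)
  have fin_pairs: "finite_levels ((?S - {[]}) \<times> ?S) (\<lambda>(g, d). length g + length d)"
    using fin_S' fin_S by (rule finite_levels_Times)
  have fin_R: "finite_levels R ?w" unfolding R_def using fin_L fin_pairs by (rule finite_levels_Times)
  show "finite_levels ((\<lambda>(xs, g, d). (xs @ [g], d)) ` R) (length \<circ> assemble)"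
    using inj finite_levels_cong[OF w[symmetric] finite_levels_shift[OF fin_R]]
    by (rule finite_levels_image)
  have "counting_fps R ?w = counting_fps {xs \<in> lists ?S. length xs < t} (\<lambda>xs. length xs + sumlen xs) *
      (counting_fps ((?S - {[]}) \<times> ?S) (\<lambda>(g, d). length g + length d) :: int fps)"
    unfolding R_def using fin_L fin_pairs by (rule counting_fps_Times)
  also have "(counting_fps ((?S - {[]}) \<times> ?S) (\<lambda>(g, d). length g + length d) :: int fps) =
      counting_fps (?S - {[]}) length * counting_fps ?S length"
    using fin_S' fin_S by (rule counting_fps_Times)
  also have "counting_fps {xs \<in> lists ?S. length xs < t} (\<lambda>xs. length xs + sumlen xs) *
      (counting_fps (?S - {[]}) length * counting_fps ?S length) =
      (\<Sum>j<t. (fps_X * f_gf t) ^ j) * ((f_gf t - 1) * f_gf t)"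
    by (simp add: counting_fps_short_lists[OF fin_S] f_gf_eq_counting_fps counting_fps_nonempty_sortable_perms)
  finally show "counting_fps ((\<lambda>(xs, g, d). (xs @ [g], d)) ` R) (length \<circ> assemble) =
      fps_X * ((\<Sum>j<t. (fps_X * f_gf t) ^ j) * ((f_gf t - 1) * f_gf t))"
    unfolding counting_fps_image[OF inj] counting_fps_cong[OF w]
    by (simp add: counting_fps_shift[of _ 1, simplified])
qed


lemma assemble_image:
  assumes "1 \<le> t"
  shows "assemble ` decompositions t = sortable_perms t - {[]}"
proof (intro equalityI subsetI)
  fix p assume "p \<in> assemble ` decompositions t"
  then obtain x where "x \<in> decompositions t" "p = assemble x" by blast
  moreover have "assemble x \<noteq> []"
    using \<open>x \<in> decompositions t\<close> length_assemble[of x] unfolding decompositions_def by auto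
  ultimately show "p \<in> sortable_perms t - {[]}" using assemble_in_sortable_perms by simp
next
  fix p assume "p \<in> sortable_perms t - {[]}"
  then show "p \<in> assemble ` decompositions t" using assemble_surj[OF assms] by simp
qed

lemma sum_power_atLeast1: "(\<Sum>u = 1..t. y ^ u) = y * (\<Sum>j<t. (y :: 'a :: comm_semiring_1) ^ j)"
  by (induction t) (auto simp: sum.atLeast_Suc_atMost algebra_simps)

lemma f_gf_functional_equation:
  assumes "1 \<le> t"
  defines "f \<equiv> f_gf t"
  shows "f = 1 + fps_X * f + (f - 1) * (\<Sum>u = 1..t. fps_X ^ u * f ^ u)"
proof -
  let ?P = "(\<lambda>d. ([[]], d)) ` sortable_perms t"
  let ?R = "(\<lambda>(xs, g, d). (xs @ [g], d)) `
    ({xs \<in> lists (sortable_perms t). length xs < t} \<times> ((sortable_perms t - {[]}) \<times> sortable_perms t))"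
  have "?P \<inter> ?R = {}" by auto
  have "f - 1 = counting_fps (assemble ` decompositions t) length"
    by (simp add: f_def assemble_image[OF assms(1)] counting_fps_nonempty_sortable_perms)
  also have "\<dots> = counting_fps (decompositions t) (length \<circ> assemble)"
    by (rule counting_fps_image[OF assemble_inj])
  also have "\<dots> = counting_fps (?P \<union> ?R) (length \<circ> assemble)"
    by (simp only: decompositions_eq[OF assms(1)])
  also have "\<dots> = counting_fps ?P (length \<circ> assemble) + counting_fps ?R (length \<circ> assemble)"
    using \<open>?P \<inter> ?R = {}\<close> finite_levels_decompositions_Nil finite_levels_decompositions_snoc
    by (rule counting_fps_Un)
  also have "\<dots> = fps_X * f + fps_X * ((\<Sum>j<t. (fps_X * f) ^ j) * ((f - 1) * f))"
    by (simp only: counting_fps_decompositions_Nil counting_fps_decompositions_snoc f_def)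
  finally have "f = 1 + fps_X * f + fps_X * ((\<Sum>j<t. (fps_X * f) ^ j) * ((f - 1) * f))"
    by (simp add: algebra_simps)
  also have "\<dots> = 1 + fps_X * f + (f - 1) * (fps_X * f * (\<Sum>j<t. (fps_X * f) ^ j))"
    by (simp add: algebra_simps)
  also have "fps_X * f * (\<Sum>j<t. (fps_X * f) ^ j) = (\<Sum>u = 1..t. fps_X ^ u * f ^ u)"
    by (simp only: sum_power_atLeast1 flip: power_mult_distrib)
  finally show ?thesis .
qed

lemma sum_power_atLeast2_mult:
  fixes g :: "'a :: comm_ring_1"
  assumes "1 \<le> t"
  shows "(\<Sum>i = 2..t. g ^ i) * (g - 1) = g ^ (t + 1) - g ^ 2"
proof (cases "t = 1")
  case False
  then have "(1 - g) * (\<Sum>i = 2..t. g ^ i) = g ^ 2 - g ^ Suc t"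
    using assms by (intro sum_gp_multiplied) simp
  then show ?thesis by (simp add: algebra_simps)
qed (simp add: power2_eq_square)

lemma functional_equation_imp_g_equations:
  fixes f x :: "'a :: comm_ring_1"
  assumes "1 \<le> t" and eq: "f = 1 + x * f + (f - 1) * (\<Sum>u = 1..t. x ^ u * f ^ u)"
  defines "g \<equiv> x * f"
  shows "g ^ (t + 1) + (1 - x) * (\<Sum>i = 2..t. g ^ i) - g + x = 0" (is "?E = 0")
    and "x * (- (g ^ (t + 1)) + g ^ 2 + g - 1) + (g ^ (t + 2) - 2 * g ^ 2 + g) = 0"
proof -
  let ?S = "\<Sum>i = 2..t. g ^ i"
  have S_mult: "(g - 1) * ((1 - x) * ?S) = (1 - x) * (g ^ (t + 1) - g ^ 2)"
    using sum_power_atLeast2_mult[OF assms(1), of g] by (simp only: ac_simps)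
  have "(\<Sum>u = 1..t. g ^ u) = g + ?S"
    using assms(1) by (simp add: sum.atLeast_Suc_atMost numeral_2_eq_2)
  then have "(g - x) * (\<Sum>u = 1..t. g ^ u) = g ^ (t + 1) + (1 - x) * ?S - x * g"
    using sum_power_atLeast2_mult[OF assms(1), of g] by (simp add: algebra_simps power2_eq_square)
  moreover have "g = x + x * g + (g - x) * (\<Sum>u = 1..t. g ^ u)"
    using arg_cong[OF eq, of "\<lambda>y. x * y"] unfolding g_def
    by (simp add: power_mult_distrib algebra_simps)
  ultimately have "g = x + x * g + (g ^ (t + 1) + (1 - x) * ?S - x * g)" by simp
  then show "?E = 0" by (simp add: algebra_simps)
  have "x * (- (g ^ (t + 1)) + g ^ 2 + g - 1) + (g ^ (t + 2) - 2 * g ^ 2 + g) = (g - 1) * ?E"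
    using S_mult by (simp add: algebra_simps power2_eq_square)
  with \<open>?E = 0\<close> show "x * (- (g ^ (t + 1)) + g ^ 2 + g - 1) + (g ^ (t + 2) - 2 * g ^ 2 + g) = 0"
    by simp
qed

theorem mainTheorem6:
  fixes t :: nat
  assumes "t \<ge> 1"
  defines "f \<equiv> f_gf t" and "g \<equiv> fps_X * f_gf t"
  shows "(f = 1 + fps_X * f + (f - 1) * (\<Sum>u = 1..t. fps_X ^ u * f ^ u)) \<and>
    (g ^ (t + 1) + (1 - fps_X) * (\<Sum>i = 2..t. g ^ i) - g + fps_X = 0) \<and>
    (fps_X * (- (g ^ (t + 1)) + g ^ 2 + g - 1) + (g ^ (t + 2) - 2 * g ^ 2 + g) = 0)"
proof -
  have eq: "f = 1 + fps_X * f + (f - 1) * (\<Sum>u = 1..t. fps_X ^ u * f ^ u)"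
    unfolding f_def using assms(1) by (rule f_gf_functional_equation)
  have "g = fps_X * f" by (simp add: f_def g_def)
  with eq functional_equation_imp_g_equations[OF assms(1) eq] show ?thesis by simp
qed

end
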